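(* Let $I^\bullet$ be a bounded complex of free modules in $\mathcal{M}_\Lambda$ with $F_0I^\bullet=0$. Then for any bounded complex $K^\bullet$ of modules in $\mathcal{M}_\Lambda$, the maps induced by the inclusion $\sigma K^\bullet\hookrightarrow K^\bullet$, $$\mathrm{Hom}_{\mathbf{C}(\Lambda)}(K^\bullet,I^\bullet)\to\mathrm{Hom}_{\mathbf{C}(\Lambda)}(\sigma K^\bullet,I^\bullet)\quad\text{and}\quad \mathrm{Hom}_{\mathbf{K}(\Lambda)}(K^\bullet,I^\bullet)\to\mathrm{Hom}_{\mathbf{K}(\Lambda)}(\sigma K^\bullet,I^\bullet),$$ are isomorphisms.
   Context: Let $k$ be a field, $n\ge2$, $V$ a $k$-vector space of dimension $n+1$, $\Lambda=\bigoplus_{d\ge0}\Lambda^dV$ the exterior algebra graded by $\Lambda_d=\Lambda^dV$. $\mathcal{M}_\Lambda$ is the category of finitely generated graded right $\Lambda$-modules; $N(a)_i=N_{a+i}$; $N^\vee_i=(N_{-i})^*$, so $\Lambda^\vee_i=\Lambda^{-i}V^*$. A free module is a finite direct sum of modules $\Lambda^\vee(a)$. $\mathbf{C}(\Lambda)$ and $\mathbf{K}(\Lambda)$ are the category of complexes in $\mathcal{M}_\Lambda$ and its homotopy category. For $N$ in $\mathcal{M}_\Lambda$ and $d\in\mathbb{Z}$, $N_{\le d}$ (resp. $N_{\ge d}$) denotes the submodule generated by the homogeneous elements of degree $\le d$ (resp. $\ge d$). For a complex $I^\bullet$ of free modules, $F_jI^p:=I^p_{\le j-p-n-1}$ (if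 $I^p=\bigoplus_iH^i_{p-i}\otimes\Lambda^\vee(p-i)$ then $F_jI^p=\bigoplus_{i\le j}H^i_{p-i}\otimes\Lambda^\vee(p-i)$); $F_0I^\bullet=0$ means $F_0I^p=0$ for all $p$. For a complex $K^\bullet$, $\sigma K^\bullet$ is the subcomplex with $\sigma K^p=K^p_{\ge -p}$. *)

theory Defs
  imports "Jordan_Normal_Form.Matrix"
begin

text \<open>V = k^(n+1) with basis e_0,...,e_n; Lambda is the exterior
algebra on V.  A finitely generated graded right Lambda-module N is encoded by
the dimensions of its (finite-dimensional) homogeneous components N_i = k^(dims N i)
(finitely many nonzero) and by the matrices of right multiplication by the
generators e_j : N_i -> N_(i+1) (acting on column vectors), subject to the defining
relations of the exterior algebra.\<close>

record 'k gmod =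
  dims :: "int \<Rightarrow> nat"
  acts :: "nat \<Rightarrow> int \<Rightarrow> 'k mat"

definition gmod_wf :: "nat \<Rightarrow> 'k::field gmod \<Rightarrow> bool" where
  "gmod_wf n M \<longleftrightarrow>
     finite {i. dims M i \<noteq> 0} \<and>
     (\<forall>j\<le>n. \<forall>i. acts M j i \<in> carrier_mat (dims M (i+1)) (dims M i)) \<and>
     (\<forall>j\<le>n. \<forall>l\<le>n. \<forall>i. acts M l (i+1) * acts M j i = - (acts M j (i+1) * acts M l i)) \<and>
     (\<forall>j\<le>n. \<forall>i. acts M j (i+1) * acts M j i = 0\<^sub>m (dims M (i+2)) (dims M i))"

definition gmap :: "nat \<Rightarrow> 'k::field gmod \<Rightarrow> 'k gmod \<Rightarrow> (int \<Rightarrow> 'k mat) \<Rightarrow> bool" where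
  "gmap n M N f \<longleftrightarrow>
     (\<forall>i. f i \<in> carrier_mat (dims N i) (dims M i)) \<and>
     (\<forall>j\<le>n. \<forall>i. f (i+1) * acts M j i = acts N j i * f i)"

definition giso :: "nat \<Rightarrow> 'k::field gmod \<Rightarrow> 'k gmod \<Rightarrow> bool" where
  "giso n M N \<longleftrightarrow> (\<exists>f g. gmap n M N f \<and> gmap n N M g \<and>
      (\<forall>i. g i * f i = 1\<^sub>m (dims M i)) \<and> (\<forall>i. f i * g i = 1\<^sub>m (dims N i)))"

definition subs :: "nat \<Rightarrow> int \<Rightarrow> nat list list" where
  "subs n m = (if m < 0 then [] else filter (\<lambda>xs. length xs = nat m) (subseqs [0..<Suc n]))"

text \<open>The module Lambda^vee(a): (Lambda^vee(a))_i = (Lambda^(-a-i) V)^*, with basis the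
dual basis e_S^* (|S| = -a-i) and right action (phi . lambda)(mu) = phi(lambda mu),
so e_S^* . e_j = (-1)^{#{s in S. s < j}} e_(S-{j})^* if j in S, and 0 otherwise.\<close>
definition lamdual :: "nat \<Rightarrow> int \<Rightarrow> 'k::field gmod" where
  "lamdual n a =
    \<lparr> dims = (\<lambda>i. length (subs n (- a - i))),
      acts = (\<lambda>j i. mat (length (subs n (- a - i - 1))) (length (subs n (- a - i)))
        (\<lambda>(r, c). let S = set (subs n (- a - i) ! c); T = set (subs n (- a - i - 1) ! r) in
           if j \<in> S \<and> T = S - {j} then (- 1) ^ card {s\<in>S. s < j} else 0)) \<rparr>"

definition gsum :: "'k::field gmod \<Rightarrow> 'k gmod \<Rightarrow> 'k gmod" where
  "gsum M N = \<lparr> dims = (\<lambda>i. dims M i + dims N i),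
     acts = (\<lambda>j i. four_block_mat (acts M j i) (0\<^sub>m (dims M (i+1)) (dims N i))
                                  (0\<^sub>m (dims N (i+1)) (dims M i)) (acts N j i)) \<rparr>"

definition gzero :: "'k::field gmod" where
  "gzero = \<lparr> dims = (\<lambda>i. 0), acts = (\<lambda>j i. 0\<^sub>m 0 0) \<rparr>"

definition free_gmod :: "nat \<Rightarrow> 'k::field gmod \<Rightarrow> bool" where
  "free_gmod n M \<longleftrightarrow> (\<exists>as. giso n M (foldr (\<lambda>a R. gsum (lamdual n a) R) as gzero))"

text \<open>Complexes in M_Lambda: modules C^p, differentials d^p : C^p -> C^(p+1)
(component d^p_i on degree i).\<close>
record 'k cplx =
  cmod :: "int \<Rightarrow> 'k gmod"
  cdiff :: "int \<Rightarrow> int \<Rightarrow> 'k mat"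

definition cplx_wf :: "nat \<Rightarrow> 'k::field cplx \<Rightarrow> bool" where
  "cplx_wf n C \<longleftrightarrow>
     (\<forall>p. gmod_wf n (cmod C p)) \<and>
     (\<forall>p. gmap n (cmod C p) (cmod C (p+1)) (cdiff C p)) \<and>
     (\<forall>p i. cdiff C (p+1) i * cdiff C p i = 0\<^sub>m (dims (cmod C (p+2)) i) (dims (cmod C p) i))"

definition bounded_cplx :: "'k::field cplx \<Rightarrow> bool" where
  "bounded_cplx C \<longleftrightarrow> finite {p. \<exists>i. dims (cmod C p) i \<noteq> 0}"

definition HomC :: "nat \<Rightarrow> 'k::field cplx \<Rightarrow> 'k cplx \<Rightarrow> (int \<Rightarrow> int \<Rightarrow> 'k mat) set" where
  "HomC n K L = {f. (\<forall>p. gmap n (cmod K p) (cmod L p) (f p)) \<and>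
       (\<forall>p i. f (p+1) i * cdiff K p i = cdiff L p i * f p i)}"

definition cm_comp :: "(int \<Rightarrow> int \<Rightarrow> 'k::field mat) \<Rightarrow> (int \<Rightarrow> int \<Rightarrow> 'k mat) \<Rightarrow> (int \<Rightarrow> int \<Rightarrow> 'k mat)" where
  "cm_comp g f = (\<lambda>p i. g p i * f p i)"

definition htp :: "nat \<Rightarrow> 'k::field cplx \<Rightarrow> 'k cplx \<Rightarrow> ((int \<Rightarrow> int \<Rightarrow> 'k mat) \<times> (int \<Rightarrow> int \<Rightarrow> 'k mat)) set" where
  "htp n K L = {(f, g). f \<in> HomC n K L \<and> g \<in> HomC n K L \<and>
      (\<exists>h. (\<forall>p. gmap n (cmod K p) (cmod L (p-1)) (h p)) \<and>
           (\<forall>p i. f p i - g p i = cdiff L (p-1) i * h p i + h (p+1) i * cdiff K p i))}"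

definition HomK :: "nat \<Rightarrow> 'k::field cplx \<Rightarrow> 'k cplx \<Rightarrow> (int \<Rightarrow> int \<Rightarrow> 'k mat) set set" where
  "HomK n K L = HomC n K L // htp n K L"

text \<open>sigma K: sigma K^p = K^p_{>= -p}.  Since Lambda is non-negatively graded, the
submodule generated by homogeneous elements of degree >= -p is the sum of the
components of degree >= -p.\<close>
definition sigma :: "'k::field cplx \<Rightarrow> 'k cplx" where
  "sigma K = \<lparr> cmod = (\<lambda>p.
       \<lparr> dims = (\<lambda>i. if - p \<le> i then dims (cmod K p) i else 0),
         acts = (\<lambda>j i. if - p \<le> i then acts (cmod K p) j i
                       else 0\<^sub>m (if - p \<le> i + 1 then dims (cmod K p) (i+1) else 0) 0) \<rparr>),
     cdiff = (\<lambda>p i. if - p \<le> i then cdiff K p i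
                    else 0\<^sub>m (if - (p+1) \<le> i then dims (cmod K (p+1)) i else 0) 0) \<rparr>"

definition incl :: "'k::field cplx \<Rightarrow> int \<Rightarrow> int \<Rightarrow> 'k mat" where
  "incl K = (\<lambda>p i. if - p \<le> i then 1\<^sub>m (dims (cmod K p) i) else 0\<^sub>m (dims (cmod K p) i) 0)"

text \<open>F_0 I = 0: F_0 I^p = I^p_{<= -p-n-1}, the submodule generated by homogeneous
elements of degree <= -p-n-1; it vanishes iff those components vanish.\<close>
definition F0_zero :: "nat \<Rightarrow> 'k::field cplx \<Rightarrow> bool" where
  "F0_zero n I \<longleftrightarrow> (\<forall>p i. i \<le> - p - int n - 1 \<longrightarrow> dims (cmod I p) i = 0)"

end

theory Submission
  imports Defs
begin

text \<open>Every summand \<open>\<Lambda>\<^sup>\<or>(a)\<close> of \<open>I\<^sup>p\<close> satisfies Baer's criterion for the augmentation ideal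
  of \<open>\<Lambda>\<close> degree by degree, and its socle sits in its top degree \<open>-a\<close>; the condition
  \<open>F\<^sub>0I = 0\<close> forces \<open>-a \<ge> 1 - p\<close>.  Hence a degree-0 map \<open>K\<^sup>p \<rightarrow> I\<^sup>p\<close> is determined by its
  components in degrees \<open>\<ge> -p\<close> (going down one degree at a time, a difference killed by all
  \<open>e\<^sub>j\<close> lies in the socle), and any compatible family of such components extends downwards
  (Baer's criterion provides each new component).  Since \<open>\<sigma>K\<^sup>p\<close> consists of exactly these
  components of \<open>K\<^sup>p\<close>, chain maps, the chain condition (maps \<open>K\<^sup>p \<rightarrow> I\<^sup>p\<^sup>+\<^sup>1\<close>) and homotopies
  (maps \<open>K\<^sup>p \<rightarrow> I\<^sup>p\<^sup>-\<^sup>1\<close>) all restrict bijectively along \<open>\<sigma>K \<hookrightarrow> K\<close>.\<close>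

lemma mat_zero_cols: "A \<in> carrier_mat r 0 \<Longrightarrow> A = 0\<^sub>m r 0"
  by (intro eq_matI) auto

lemma vec_carrier_zero_eq: "(u :: 'a vec) \<in> carrier_vec 0 \<Longrightarrow> v \<in> carrier_vec 0 \<Longrightarrow> u = v"
  by (rule eq_vecI) auto

lemma minus_vec_eq_zero_iff:
  fixes v w :: "'a::ab_group_add vec"
  assumes "v \<in> carrier_vec n" "w \<in> carrier_vec n"
  shows "v - w = 0\<^sub>v n \<longleftrightarrow> v = w"
proof
  assume vw: "v - w = 0\<^sub>v n"
  show "v = w"
  proof (rule eq_vecI)
    fix k assume "k < dim_vec w"
    then show "v $ k = w $ k" using arg_cong[OF vw, of "\<lambda>x. x $ k"] assms by simp
  qed (use assms in auto)
qed (use assms in simp)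

lemma mult_mat_vec_zero: "A \<in> carrier_mat r c \<Longrightarrow> A *\<^sub>v 0\<^sub>v c = (0\<^sub>v r :: 'a::semiring_0 vec)"
  by (rule eq_vecI) (auto simp: scalar_prod_def)

lemma zero_mult_mat_vec: "w \<in> carrier_vec c \<Longrightarrow> 0\<^sub>m r c *\<^sub>v w = (0\<^sub>v r :: 'a::semiring_0 vec)"
  by (rule eq_vecI) (auto simp: scalar_prod_def)

lemma mult_mat_vec_uminus:
  fixes A :: "'a::ring mat"
  assumes "A \<in> carrier_mat r c" "v \<in> carrier_vec c"
  shows "A *\<^sub>v (- v) = - (A *\<^sub>v v)"
  by (rule eq_vecI) (use assms in auto)

lemma append_zero_vec: "0\<^sub>v k @\<^sub>v 0\<^sub>v l = (0\<^sub>v (k + l) :: 'a::zero vec)"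
  by (rule eq_vecI) (auto simp: append_vec_def)

lemma uminus_append_vec:
  fixes a :: "'a::ab_group_add vec"
  assumes "a \<in> carrier_vec k" "b \<in> carrier_vec l"
  shows "- (a @\<^sub>v b) = (- a) @\<^sub>v (- b)"
  by (rule eq_vecI) (use assms in \<open>auto simp: append_vec_def\<close>)

lemma minus_mat_eq_add_swap:
  fixes A :: "'a::ab_group_add mat"
  assumes "A \<in> carrier_mat r c" "B \<in> carrier_mat r c" "P \<in> carrier_mat r c" "Q \<in> carrier_mat r c"
    and "A - B = P + Q"
  shows "B - A = (- P) + (- Q)"
proof (rule eq_matI)
  fix i j assume "i < dim_row (- P + - Q)" "j < dim_col (- P + - Q)"
  then have ij: "i < r" "j < c" using assms by auto
  have "(A - B) $$ (i,j) = (P + Q) $$ (i,j)" using assms(5) by simp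
  then have "A $$ (i,j) - B $$ (i,j) = P $$ (i,j) + Q $$ (i,j)" using assms(1-4) ij by simp
  then show "(B - A) $$ (i, j) = (- P + - Q) $$ (i, j)" using assms(1-4) ij by (simp add: algebra_simps)
qed (use assms in auto)

lemma minus_mat_eq_add_trans:
  fixes A :: "'a::ab_group_add mat"
  assumes c: "A \<in> carrier_mat r c" "B \<in> carrier_mat r c" "C \<in> carrier_mat r c"
    "P1 \<in> carrier_mat r c" "Q1 \<in> carrier_mat r c" "P2 \<in> carrier_mat r c" "Q2 \<in> carrier_mat r c"
    and e1: "A - B = P1 + Q1" and e2: "B - C = P2 + Q2"
  shows "A - C = (P1 + P2) + (Q1 + Q2)"
proof (rule eq_matI)
  fix i j assume "i < dim_row (P1 + P2 + (Q1 + Q2))" "j < dim_col (P1 + P2 + (Q1 + Q2))"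
  then have ij: "i < r" "j < c" using c by auto
  have "(A - B) $$ (i,j) = (P1 + Q1) $$ (i,j)" "(B - C) $$ (i,j) = (P2 + Q2) $$ (i,j)"
    using e1 e2 by simp_all
  then show "(A - C) $$ (i, j) = (P1 + P2 + (Q1 + Q2)) $$ (i, j)" using c ij
    by (simp add: algebra_simps)
qed (use c in auto)

section \<open>Maps into socle-free and Baer-injective graded modules\<close>

definition acts_carrier :: "nat \<Rightarrow> 'k::field gmod \<Rightarrow> bool" where
  "acts_carrier n M \<longleftrightarrow> (\<forall>j\<le>n. \<forall>i. acts M j i \<in> carrier_mat (dims M (i+1)) (dims M i))"

lemma gmod_wf_acts_carrier: "gmod_wf n M \<Longrightarrow> acts_carrier n M"
  unfolding gmod_wf_def acts_carrier_def by auto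

lemma acts_carrierD: "acts_carrier n M \<Longrightarrow> j \<le> n \<Longrightarrow> acts M j i \<in> carrier_mat (dims M (i+1)) (dims M i)"
  unfolding acts_carrier_def by auto

lemma acts_carrierD':
  "acts_carrier n M \<Longrightarrow> j \<le> n \<Longrightarrow> acts M j (i+1) \<in> carrier_mat (dims M (i+2)) (dims M (i+1))"
  using acts_carrierD[of n M j "i+1"] by (simp add: add.assoc)

lemma gmap_carrier: "gmap n M N f \<Longrightarrow> f i \<in> carrier_mat (dims N i) (dims M i)"
  unfolding gmap_def by auto

lemma gmap_commute: "gmap n M N f \<Longrightarrow> j \<le> n \<Longrightarrow> f (i+1) * acts M j i = acts N j i * f i"
  unfolding gmap_def by auto

lemma gmap_comp:
  assumes F: "gmap n X Y F" and G: "gmap n Y Z G"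
    and X: "acts_carrier n X" and Y: "acts_carrier n Y" and Z: "acts_carrier n Z"
  shows "gmap n X Z (\<lambda>i. G i * F i)"
  unfolding gmap_def
proof (intro conjI allI impI)
  fix i show "G i * F i \<in> carrier_mat (dims Z i) (dims X i)"
    using gmap_carrier[OF F, of i] gmap_carrier[OF G, of i] by (rule mult_carrier_mat[rotated])
next
  fix j i assume j: "j \<le> n"
  have c: "F i \<in> carrier_mat (dims Y i) (dims X i)" "G i \<in> carrier_mat (dims Z i) (dims Y i)"
    "F (i+1) \<in> carrier_mat (dims Y (i+1)) (dims X (i+1))"
    "G (i+1) \<in> carrier_mat (dims Z (i+1)) (dims Y (i+1))"
    "acts X j i \<in> carrier_mat (dims X (i+1)) (dims X i)"
    "acts Y j i \<in> carrier_mat (dims Y (i+1)) (dims Y i)"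
    "acts Z j i \<in> carrier_mat (dims Z (i+1)) (dims Z i)"
    using gmap_carrier[OF F] gmap_carrier[OF G] acts_carrierD[OF X j] acts_carrierD[OF Y j]
      acts_carrierD[OF Z j] by auto
  have "G (i+1) * F (i+1) * acts X j i = G (i+1) * (F (i+1) * acts X j i)" using c by simp
  also have "\<dots> = (G (i+1) * acts Y j i) * F i" using gmap_commute[OF F j] c by simp
  also have "\<dots> = acts Z j i * (G i * F i)" using gmap_commute[OF G j] c by simp
  finally show "G (i+1) * F (i+1) * acts X j i = acts Z j i * (G i * F i)" .
qed

lemma gmap_add:
  assumes F: "gmap n X Y F" and G: "gmap n X Y G" and X: "acts_carrier n X" and Y: "acts_carrier n Y"
  shows "gmap n X Y (\<lambda>i. F i + G i)"
  unfolding gmap_def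
proof (intro conjI allI impI)
  fix i show "F i + G i \<in> carrier_mat (dims Y i) (dims X i)"
    using gmap_carrier[OF F] gmap_carrier[OF G] by simp
next
  fix j i assume j: "j \<le> n"
  have c: "F i \<in> carrier_mat (dims Y i) (dims X i)" "G i \<in> carrier_mat (dims Y i) (dims X i)"
    "F (i+1) \<in> carrier_mat (dims Y (i+1)) (dims X (i+1))"
    "G (i+1) \<in> carrier_mat (dims Y (i+1)) (dims X (i+1))"
    "acts X j i \<in> carrier_mat (dims X (i+1)) (dims X i)"
    "acts Y j i \<in> carrier_mat (dims Y (i+1)) (dims Y i)"
    using gmap_carrier[OF F] gmap_carrier[OF G] acts_carrierD[OF X j] acts_carrierD[OF Y j] by auto
  have "(F (i+1) + G (i+1)) * acts X j i = F (i+1) * acts X j i + G (i+1) * acts X j i"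
    using c by (simp add: add_mult_distrib_mat)
  also have "\<dots> = acts Y j i * (F i + G i)"
    using gmap_commute[OF F j] gmap_commute[OF G j] c by (simp add: mult_add_distrib_mat)
  finally show "(F (i+1) + G (i+1)) * acts X j i = acts Y j i * (F i + G i)" .
qed

lemma gmap_uminus:
  assumes F: "gmap n X Y F" and X: "acts_carrier n X" and Y: "acts_carrier n Y"
  shows "gmap n X Y (\<lambda>i. - F i)"
  unfolding gmap_def
proof (intro conjI allI impI)
  fix i show "- F i \<in> carrier_mat (dims Y i) (dims X i)" using gmap_carrier[OF F] by simp
next
  fix j i assume j: "j \<le> n"
  have c: "F i \<in> carrier_mat (dims Y i) (dims X i)"
    "F (i+1) \<in> carrier_mat (dims Y (i+1)) (dims X (i+1))"
    "acts X j i \<in> carrier_mat (dims X (i+1)) (dims X i)"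
    "acts Y j i \<in> carrier_mat (dims Y (i+1)) (dims Y i)"
    using gmap_carrier[OF F] acts_carrierD[OF X j] acts_carrierD[OF Y j] by auto
  then show "(- F (i+1)) * acts X j i = acts Y j i * (- F i)"
    using gmap_commute[OF F j] by simp
qed

lemma gmap_diff:
  assumes F: "gmap n X Y F" and G: "gmap n X Y G" and X: "acts_carrier n X" and Y: "acts_carrier n Y"
  shows "gmap n X Y (\<lambda>i. F i - G i)"
proof -
  have "F i + (- G i) = F i - G i" for i
    using gmap_carrier[OF F, of i] gmap_carrier[OF G, of i] by (simp add: add_uminus_minus_mat)
  then show ?thesis using gmap_add[OF F gmap_uminus[OF G X Y] X Y] by simp
qed

lemma gmap_zero:
  assumes X: "acts_carrier n X" and Y: "acts_carrier n Y"
  shows "gmap n X Y (\<lambda>i. 0\<^sub>m (dims Y i) (dims X i))"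
  unfolding gmap_def
proof (intro conjI allI impI)
  fix j i assume j: "j \<le> n"
  show "0\<^sub>m (dims Y (i + 1)) (dims X (i + 1)) * acts X j i = acts Y j i * 0\<^sub>m (dims Y i) (dims X i)"
    using acts_carrierD[OF X j, of i] acts_carrierD[OF Y j, of i] by simp
qed simp

definition socle_free_below :: "nat \<Rightarrow> 'k::field gmod \<Rightarrow> int \<Rightarrow> bool" where
  "socle_free_below n M D \<longleftrightarrow> (\<forall>i<D. \<forall>y\<in>carrier_vec (dims M i).
      (\<forall>j\<le>n. acts M j i *\<^sub>v y = 0\<^sub>v (dims M (i+1))) \<longrightarrow> y = 0\<^sub>v (dims M i))"

text \<open>Images \<open>z\<^sub>j \<in> M\<^sub>i\<^sub>+\<^sub>1\<close> of the generators \<open>e\<^sub>j\<close> of the augmentation ideal, subject to the exterior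
  relations; the square relation does not follow from anticommutation in characteristic 2.\<close>
definition exterior_relations :: "nat \<Rightarrow> 'k::field gmod \<Rightarrow> int \<Rightarrow> (nat \<Rightarrow> 'k vec) \<Rightarrow> bool" where
  "exterior_relations n M i z \<longleftrightarrow> (\<forall>j\<le>n. z j \<in> carrier_vec (dims M (i+1))) \<and>
      (\<forall>j\<le>n. \<forall>l\<le>n. acts M l (i+1) *\<^sub>v z j = - (acts M j (i+1) *\<^sub>v z l)) \<and>
      (\<forall>j\<le>n. acts M j (i+1) *\<^sub>v z j = 0\<^sub>v (dims M (i+2)))"

lemma exterior_relationsI:
  assumes "\<And>j. j \<le> n \<Longrightarrow> z j \<in> carrier_vec (dims M (i+1))"
    and "\<And>j l. j \<le> n \<Longrightarrow> l \<le> n \<Longrightarrow> acts M l (i+1) *\<^sub>v z j = - (acts M j (i+1) *\<^sub>v z l)"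
    and "\<And>j. j \<le> n \<Longrightarrow> acts M j (i+1) *\<^sub>v z j = 0\<^sub>v (dims M (i+2))"
  shows "exterior_relations n M i z"
  using assms unfolding exterior_relations_def by blast

lemma
  assumes "exterior_relations n M i z" and j: "j \<le> n"
  shows exterior_relations_carrier: "z j \<in> carrier_vec (dims M (i+1))"
    and exterior_relations_anti: "l \<le> n \<Longrightarrow> acts M l (i+1) *\<^sub>v z j = - (acts M j (i+1) *\<^sub>v z l)"
    and exterior_relations_square: "acts M j (i+1) *\<^sub>v z j = 0\<^sub>v (dims M (i+2))"
  using assms unfolding exterior_relations_def by blast+

lemma exterior_relations_cong:
  "(\<And>j. j \<le> n \<Longrightarrow> z j = z' j) \<Longrightarrow> exterior_relations n M i z \<longleftrightarrow> exterior_relations n M i z'"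
  by (simp add: exterior_relations_def)

text \<open>Baer's criterion for the augmentation ideal of \<open>\<Lambda>\<close>, degree by degree: every degree-0 map
  from the ideal to \<open>M\<close> extends to \<open>\<Lambda>\<close>.\<close>
definition baer_injective :: "nat \<Rightarrow> 'k::field gmod \<Rightarrow> bool" where
  "baer_injective n M \<longleftrightarrow> (\<forall>i z. exterior_relations n M i z \<longrightarrow>
      (\<exists>y\<in>carrier_vec (dims M i). \<forall>j\<le>n. acts M j i *\<^sub>v y = z j))"

lemma socle_free_below_mono: "socle_free_below n M D \<Longrightarrow> D' \<le> D \<Longrightarrow> socle_free_below n M D'"
  unfolding socle_free_below_def by auto

lemma gmap_eq_descend:
  assumes M: "socle_free_below n M D" "acts_carrier n M" and X: "acts_carrier n X"
    and F: "gmap n X M F" and G: "gmap n X M G" and i: "i < D" and eq: "F (i+1) = G (i+1)"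
  shows "F i = G i"
proof (rule mat_col_eqI)
  have Fi: "F i \<in> carrier_mat (dims M i) (dims X i)" and Gi: "G i \<in> carrier_mat (dims M i) (dims X i)"
    using gmap_carrier[OF F] gmap_carrier[OF G] .
  then show "dim_row (F i) = dim_row (G i)" "dim_col (F i) = dim_col (G i)" by simp_all
  fix c assume "c < dim_col (G i)"
  then have c: "c < dims X i" using Gi by simp
  have F1: "F (i+1) \<in> carrier_mat (dims M (i+1)) (dims X (i+1))" by (rule gmap_carrier[OF F])
  have "acts M j i *\<^sub>v (col (F i) c - col (G i) c) = 0\<^sub>v (dims M (i+1))" if j: "j \<le> n" for j
  proof -
    have A: "acts M j i \<in> carrier_mat (dims M (i+1)) (dims M i)"
      and AX: "acts X j i \<in> carrier_mat (dims X (i+1)) (dims X i)"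
      using acts_carrierD[OF M(2) j] acts_carrierD[OF X j] .
    have "acts M j i *\<^sub>v (col (F i) c - col (G i) c) = acts M j i *\<^sub>v col (F i) c - acts M j i *\<^sub>v col (G i) c"
      using A Fi Gi c by (intro mult_minus_distrib_mat_vec[OF A]) auto
    also have "\<dots> = col (acts M j i * F i) c - col (acts M j i * G i) c"
      using col_mult2[OF A Fi c] col_mult2[OF A Gi c] by simp
    also have "\<dots> = col (F (i+1) * acts X j i) c - col (G (i+1) * acts X j i) c"
      using gmap_commute[OF F j] gmap_commute[OF G j] by simp
    also have "\<dots> = 0\<^sub>v (dims M (i+1))" unfolding eq using F1 AX c eq by simp
    finally show ?thesis .
  qed
  then have "col (F i) c - col (G i) c = 0\<^sub>v (dims M i)"
    using M(1) i Fi Gi c unfolding socle_free_below_def by auto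
  then show "col (F i) c = col (G i) c" using minus_vec_eq_zero_iff Fi Gi c by (metis col_carrier_vec)
qed

lemma gmap_eq_if_eq_from:
  assumes M: "socle_free_below n M D" "acts_carrier n M" and X: "acts_carrier n X"
    and F: "gmap n X M F" and G: "gmap n X M G" and eq: "\<And>i. i \<ge> D \<Longrightarrow> F i = G i"
  shows "F i = G i"
proof -
  have "F (D - int k) = G (D - int k)" for k
  proof (induction k)
    case 0 then show ?case using eq by simp
  next
    case (Suc k)
    then show ?case using gmap_eq_descend[OF M X F G, of "D - int (Suc k)"] by simp
  qed
  from this[of "nat (D - i)"] show ?thesis by (cases "i \<ge> D") (auto simp: eq)
qed

lemma baer_injective_lift_column:
  assumes X: "gmod_wf n X" and M: "acts_carrier n M" "baer_injective n M"
    and Gn: "Gn \<in> carrier_mat (dims M (i+1)) (dims X (i+1))"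
    and Gnn: "Gnn \<in> carrier_mat (dims M (i+2)) (dims X (i+2))"
    and comm: "\<And>j. j \<le> n \<Longrightarrow> Gnn * acts X j (i+1) = acts M j (i+1) * Gn"
    and c: "c < dims X i"
  shows "\<exists>y\<in>carrier_vec (dims M i). \<forall>j\<le>n. acts M j i *\<^sub>v y = Gn *\<^sub>v col (acts X j i) c"
proof -
  have aX: "acts_carrier n X" using X by (rule gmod_wf_acts_carrier)
  define z where "z j = Gn *\<^sub>v col (acts X j i) c" for j
  have z_carrier: "z j \<in> carrier_vec (dims M (i+1))" if "j \<le> n" for j
    unfolding z_def using Gn acts_carrierD[OF aX that, of i] c by simp
  have z_act: "acts M l (i+1) *\<^sub>v z j = Gnn *\<^sub>v col (acts X l (i+1) * acts X j i) c"
    if j: "j \<le> n" and l: "l \<le> n" for j l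
  proof -
    have AM: "acts M l (i+1) \<in> carrier_mat (dims M (i+2)) (dims M (i+1))"
      and AXl: "acts X l (i+1) \<in> carrier_mat (dims X (i+2)) (dims X (i+1))"
      and AXj: "acts X j i \<in> carrier_mat (dims X (i+1)) (dims X i)"
      using acts_carrierD'[OF M(1) l] acts_carrierD'[OF aX l] acts_carrierD[OF aX j] .
    have "acts M l (i+1) *\<^sub>v z j = (acts M l (i+1) * Gn) *\<^sub>v col (acts X j i) c"
      unfolding z_def using AM Gn AXj c by simp
    also have "\<dots> = Gnn *\<^sub>v (acts X l (i+1) *\<^sub>v col (acts X j i) c)"
      using comm[OF l, symmetric] Gnn AXl AXj c by simp
    finally show ?thesis using col_mult2[OF AXl AXj c] by simp
  qed
  have anti: "acts M l (i+1) *\<^sub>v z j = - (acts M j (i+1) *\<^sub>v z l)" if j: "j \<le> n" and l: "l \<le> n" for j l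
  proof -
    have P: "acts X j (i+1) * acts X l i \<in> carrier_mat (dims X (i+2)) (dims X i)"
      by (rule mult_carrier_mat[OF acts_carrierD'[OF aX j] acts_carrierD[OF aX l]])
    have "acts X l (i+1) * acts X j i = - (acts X j (i+1) * acts X l i)"
      using X j l unfolding gmod_wf_def by blast
    moreover have "col (- (acts X j (i+1) * acts X l i)) c = - col (acts X j (i+1) * acts X l i) c"
      using P c by (intro col_uminus) auto
    ultimately have "acts M l (i+1) *\<^sub>v z j = Gnn *\<^sub>v (- col (acts X j (i+1) * acts X l i) c)"
      using z_act[OF j l] by simp
    also have "\<dots> = - (acts M j (i+1) *\<^sub>v z l)"
      using z_act[OF l j] P c Gnn by (simp add: mult_mat_vec_uminus)
    finally show ?thesis .
  qed
  have square: "acts M j (i+1) *\<^sub>v z j = 0\<^sub>v (dims M (i+2))" if j: "j \<le> n" for j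
  proof -
    have "acts X j (i+1) * acts X j i = 0\<^sub>m (dims X (i+2)) (dims X i)"
      using X j unfolding gmod_wf_def by blast
    then show ?thesis using z_act[OF j j] Gnn c by (simp add: mult_mat_vec_zero)
  qed
  have "exterior_relations n M i z"
    using z_carrier anti square by (rule exterior_relationsI)
  then have "\<exists>y\<in>carrier_vec (dims M i). \<forall>j\<le>n. acts M j i *\<^sub>v y = z j"
    using M(2) unfolding baer_injective_def by blast
  then show ?thesis unfolding z_def .
qed

definition lift_step :: "nat \<Rightarrow> 'k::field gmod \<Rightarrow> 'k gmod \<Rightarrow> int \<Rightarrow> 'k mat \<Rightarrow> 'k mat" where
  "lift_step n X M i Gn = mat (dims M i) (dims X i) (\<lambda>(r, c). (SOME y. y \<in> carrier_vec (dims M i) \<and>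
      (\<forall>j\<le>n. acts M j i *\<^sub>v y = Gn *\<^sub>v col (acts X j i) c)) $ r)"

lemma lift_step_carrier: "lift_step n X M i Gn \<in> carrier_mat (dims M i) (dims X i)"
  unfolding lift_step_def by simp

lemma lift_step_commute:
  assumes X: "gmod_wf n X" and M: "acts_carrier n M" "baer_injective n M"
    and Gn: "Gn \<in> carrier_mat (dims M (i+1)) (dims X (i+1))"
    and Gnn: "Gnn \<in> carrier_mat (dims M (i+2)) (dims X (i+2))"
    and comm: "\<And>j. j \<le> n \<Longrightarrow> Gnn * acts X j (i+1) = acts M j (i+1) * Gn"
    and j: "j \<le> n"
  shows "Gn * acts X j i = acts M j i * lift_step n X M i Gn"
proof (rule mat_col_eqI)
  let ?P = "\<lambda>c y. y \<in> carrier_vec (dims M i) \<and> (\<forall>j\<le>n. acts M j i *\<^sub>v y = Gn *\<^sub>v col (acts X j i) c)"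
  have AX: "acts X j i \<in> carrier_mat (dims X (i+1)) (dims X i)"
    using acts_carrierD[OF gmod_wf_acts_carrier[OF X] j] .
  have AM: "acts M j i \<in> carrier_mat (dims M (i+1)) (dims M i)" using acts_carrierD[OF M(1) j] .
  show "dim_row (Gn * acts X j i) = dim_row (acts M j i * lift_step n X M i Gn)"
    "dim_col (Gn * acts X j i) = dim_col (acts M j i * lift_step n X M i Gn)"
    using Gn AX AM lift_step_carrier[of n X M i Gn] by simp_all
  fix c assume "c < dim_col (acts M j i * lift_step n X M i Gn)"
  then have c: "c < dims X i" by (simp add: lift_step_def)
  have "\<exists>y. ?P c y" using baer_injective_lift_column[OF X M Gn Gnn comm c] by blast
  then have some: "?P c (SOME y. ?P c y)" by (rule someI_ex)
  then have "col (lift_step n X M i Gn) c = (SOME y. ?P c y)"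
    unfolding lift_step_def using c by (intro eq_vecI) auto
  then show "col (Gn * acts X j i) c = col (acts M j i * lift_step n X M i Gn) c"
    using some j col_mult2[OF Gn AX c] col_mult2[OF AM lift_step_carrier c] by simp
qed

lemma gmap_extend_from:
  assumes X: "gmod_wf n X" and M: "acts_carrier n M" "baer_injective n M"
    and G_carrier: "\<And>i. i \<ge> D \<Longrightarrow> G i \<in> carrier_mat (dims M i) (dims X i)"
    and G_commute: "\<And>i j. i \<ge> D \<Longrightarrow> j \<le> n \<Longrightarrow> G (i+1) * acts X j i = acts M j i * G i"
  obtains F where "gmap n X M F" "\<And>i. i \<ge> D \<Longrightarrow> F i = G i"
proof -
  define E where "E = rec_nat (G D) (\<lambda>k Ek. lift_step n X M (D - int k - 1) Ek)"
  define F where "F i = (if i \<ge> D then G i else E (nat (D - i)))" for i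
  have E_Suc: "E (Suc k) = lift_step n X M (D - int k - 1) (E k)" for k
    unfolding E_def by simp
  have F_E: "F (D - int k) = E k" for k
    by (cases k) (simp_all add: F_def E_def nat_add_distrib)
  have E_carrier: "E k \<in> carrier_mat (dims M (D - int k)) (dims X (D - int k))" for k
    using G_carrier[of D] lift_step_carrier by (cases k) (simp_all add: E_def algebra_simps)
  have F_carrier: "F i \<in> carrier_mat (dims M i) (dims X i)" for i
    using G_carrier E_carrier[of "nat (D - i)"] by (cases "D \<le> i") (auto simp: F_def)
  have F_commute: "F (D - int k + 1) * acts X j (D - int k) = acts M j (D - int k) * F (D - int k)"
    if j: "j \<le> n" for j k
    using j
  proof (induction k arbitrary: j)
    case 0
    then show ?case using G_commute[of D] by (simp add: F_def)
  next
    case (Suc k)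
    define i where "i = D - int (Suc k)"
    have i: "i + 1 = D - int k" "i + 2 = D - int k + 1" by (simp_all add: i_def)
    have IH: "F (i + 2) * acts X j' (i + 1) = acts M j' (i + 1) * F (i + 1)" if "j' \<le> n" for j'
      unfolding i by (rule Suc.IH[OF that])
    have "F i = E (Suc k)" using F_E[of "Suc k"] by (simp add: i_def)
    also have "\<dots> = lift_step n X M i (E k)" using E_Suc[of k] by (simp add: i_def algebra_simps)
    also have "E k = F (i + 1)" using F_E[of k] by (simp add: i(1))
    finally have F_i: "F i = lift_step n X M i (F (i + 1))" .
    show ?case
      unfolding i_def[symmetric] F_i
      by (rule lift_step_commute[OF X M F_carrier F_carrier IH Suc.prems])
  qed
  have "gmap n X M F"
    unfolding gmap_def
  proof (intro conjI allI impI)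
    fix j i assume j: "j \<le> n"
    show "F (i + 1) * acts X j i = acts M j i * F i"
    proof (cases "i \<ge> D")
      case True then show ?thesis using G_commute[OF True j] by (simp add: F_def)
    next
      case False then show ?thesis using F_commute[OF j, of "nat (D - i)"] by simp
    qed
  qed (rule F_carrier)
  then show ?thesis by (rule that) (simp add: F_def)
qed

section \<open>Retracts and direct sums\<close>

lemma gmap_exterior_relations:
  assumes f: "gmap n M N f" and M: "acts_carrier n M" and N: "acts_carrier n N"
    and z: "exterior_relations n M i z"
  shows "exterior_relations n N i (\<lambda>j. f (i+1) *\<^sub>v z j)"
proof -
  have f1: "f (i+1) \<in> carrier_mat (dims N (i+1)) (dims M (i+1))"
    and f2: "f (i+2) \<in> carrier_mat (dims N (i+2)) (dims M (i+2))"
    by (simp_all add: gmap_carrier[OF f])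
  note z_carrier = exterior_relations_carrier[OF z]
  have act: "acts N l (i+1) *\<^sub>v (f (i+1) *\<^sub>v z j) = f (i+2) *\<^sub>v (acts M l (i+1) *\<^sub>v z j)"
    if j: "j \<le> n" and l: "l \<le> n" for j l
  proof -
    have "acts N l (i+1) * f (i+1) = f (i+2) * acts M l (i+1)"
      using gmap_commute[OF f l, of "i+1"] by (simp add: add.assoc)
    then show ?thesis
      using acts_carrierD'[OF N l] acts_carrierD'[OF M l] f1 f2 z_carrier[OF j]
      by (metis assoc_mult_mat_vec)
  qed
  show ?thesis
  proof (rule exterior_relationsI)
    fix j assume j: "j \<le> n"
    show "f (i+1) *\<^sub>v z j \<in> carrier_vec (dims N (i+1))" using f1 z_carrier[OF j] by simp
    show "acts N j (i+1) *\<^sub>v (f (i+1) *\<^sub>v z j) = 0\<^sub>v (dims N (i+2))"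
      using act[OF j j] exterior_relations_square[OF z j] f2 by (simp add: mult_mat_vec_zero)
    fix l assume l: "l \<le> n"
    have "acts N l (i+1) *\<^sub>v (f (i+1) *\<^sub>v z j) = f (i+2) *\<^sub>v (- (acts M j (i+1) *\<^sub>v z l))"
      using act[OF j l] exterior_relations_anti[OF z j l] by simp
    also have "\<dots> = - (f (i+2) *\<^sub>v (acts M j (i+1) *\<^sub>v z l))"
      using f2 acts_carrierD'[OF M j, of i] z_carrier[OF l] by (intro mult_mat_vec_uminus) auto
    also have "\<dots> = - (acts N j (i+1) *\<^sub>v (f (i+1) *\<^sub>v z l))" using act[OF l j] by simp
    finally show "acts N l (i+1) *\<^sub>v (f (i+1) *\<^sub>v z j) = - (acts N j (i+1) *\<^sub>v (f (i+1) *\<^sub>v z l))" .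
  qed
qed

lemma retract_socle_free_below:
  assumes f: "gmap n M N f" and g: "\<And>i. g i \<in> carrier_mat (dims M i) (dims N i)"
    and gf: "\<And>i. g i * f i = 1\<^sub>m (dims M i)"
    and M: "acts_carrier n M" and N: "acts_carrier n N" and N_free: "socle_free_below n N D"
  shows "socle_free_below n M D"
  unfolding socle_free_below_def
proof (intro allI impI ballI)
  fix i and y :: "'a vec" assume i: "i < D" and y: "y \<in> carrier_vec (dims M i)"
    and killed: "\<forall>j\<le>n. acts M j i *\<^sub>v y = 0\<^sub>v (dims M (i + 1))"
  have fi: "f i \<in> carrier_mat (dims N i) (dims M i)"
    and fi1: "f (i+1) \<in> carrier_mat (dims N (i+1)) (dims M (i+1))" by (simp_all add: gmap_carrier[OF f])
  have "acts N j i *\<^sub>v (f i *\<^sub>v y) = 0\<^sub>v (dims N (i + 1))" if j: "j \<le> n" for j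
  proof -
    have "acts N j i *\<^sub>v (f i *\<^sub>v y) = (f (i+1) * acts M j i) *\<^sub>v y"
      using gmap_commute[OF f j] acts_carrierD[OF N j, of i] fi y by (metis assoc_mult_mat_vec)
    also have "\<dots> = 0\<^sub>v (dims N (i+1))"
      using killed j fi1 acts_carrierD[OF M j, of i] y by (simp add: mult_mat_vec_zero)
    finally show ?thesis .
  qed
  then have "f i *\<^sub>v y = 0\<^sub>v (dims N i)" using N_free i fi y unfolding socle_free_below_def by simp
  then have "(g i * f i) *\<^sub>v y = 0\<^sub>v (dims M i)" using g[of i] fi y by (simp add: mult_mat_vec_zero)
  then show "y = 0\<^sub>v (dims M i)" using gf y by simp
qed

lemma retract_baer_injective:
  assumes f: "gmap n M N f" and g: "gmap n N M g" and gf: "\<And>i. g i * f i = 1\<^sub>m (dims M i)"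
    and M: "acts_carrier n M" and N: "acts_carrier n N" and N_baer: "baer_injective n N"
  shows "baer_injective n M"
  unfolding baer_injective_def
proof (intro allI impI)
  fix i z assume z: "exterior_relations n M i z"
  note z_carrier = exterior_relations_carrier[OF z]
  obtain y where y: "y \<in> carrier_vec (dims N i)" and y_lift: "\<And>j. j \<le> n \<Longrightarrow> acts N j i *\<^sub>v y = f (i+1) *\<^sub>v z j"
    using N_baer gmap_exterior_relations[OF f M N z] unfolding baer_injective_def by blast
  have gi: "g i \<in> carrier_mat (dims M i) (dims N i)"
    and gi1: "g (i+1) \<in> carrier_mat (dims M (i+1)) (dims N (i+1))"
    and fi1: "f (i+1) \<in> carrier_mat (dims N (i+1)) (dims M (i+1))"
    using gmap_carrier[OF g] gmap_carrier[OF f] by auto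
  have "acts M j i *\<^sub>v (g i *\<^sub>v y) = z j" if j: "j \<le> n" for j
  proof -
    have "acts M j i *\<^sub>v (g i *\<^sub>v y) = (g (i+1) * acts N j i) *\<^sub>v y"
      using gmap_commute[OF g j] acts_carrierD[OF M j, of i] gi y by (metis assoc_mult_mat_vec)
    also have "\<dots> = (g (i+1) * f (i+1)) *\<^sub>v z j"
      using y_lift[OF j] gi1 fi1 acts_carrierD[OF N j, of i] y z_carrier[OF j] by simp
    finally show ?thesis using gf z_carrier[OF j] by simp
  qed
  moreover have "g i *\<^sub>v y \<in> carrier_vec (dims M i)" using gi y by simp
  ultimately show "\<exists>y\<in>carrier_vec (dims M i). \<forall>j\<le>n. acts M j i *\<^sub>v y = z j" by blast
qed

lemma gisoE:
  assumes "giso n M N"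
  obtains f g where "gmap n M N f" "gmap n N M g"
    "\<And>i. g i * f i = 1\<^sub>m (dims M i)" "\<And>i. f i * g i = 1\<^sub>m (dims N i)"
  using assms unfolding giso_def by blast

lemma giso_dims_zero:
  assumes iso: "giso n M N" and M_zero: "dims M i = 0"
  shows "dims N i = 0"
proof (rule ccontr)
  assume nz: "dims N i \<noteq> 0"
  obtain f g where f: "gmap n M N f" and g: "gmap n N M g" and fg: "f i * g i = 1\<^sub>m (dims N i)"
    using gisoE[OF iso] by metis
  have "(f i * g i) $$ (0, 0) = 0"
    using gmap_carrier[OF f, of i] gmap_carrier[OF g, of i] M_zero nz by (simp add: scalar_prod_def)
  then show False using fg nz by simp
qed

lemma gsum_dims: "dims (gsum M N) i = dims M i + dims N i"
  by (simp add: gsum_def)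

lemma acts_carrier_gsum: "acts_carrier n M \<Longrightarrow> acts_carrier n N \<Longrightarrow> acts_carrier n (gsum M N)"
  unfolding acts_carrier_def gsum_def by (auto intro!: four_block_carrier_mat)

lemma acts_gsum_append:
  assumes M: "acts_carrier n M" and N: "acts_carrier n N" and j: "j \<le> n"
    and u: "u \<in> carrier_vec (dims M i)" and w: "w \<in> carrier_vec (dims N i)"
  shows "acts (gsum M N) j i *\<^sub>v (u @\<^sub>v w) = (acts M j i *\<^sub>v u) @\<^sub>v (acts N j i *\<^sub>v w)"
proof -
  have A: "acts M j i \<in> carrier_mat (dims M (i+1)) (dims M i)"
    and B: "acts N j i \<in> carrier_mat (dims N (i+1)) (dims N i)"
    using acts_carrierD[OF M j] acts_carrierD[OF N j] .
  have "acts (gsum M N) j i *\<^sub>v (u @\<^sub>v w) = (acts M j i *\<^sub>v u + 0\<^sub>m (dims M (i+1)) (dims N i) *\<^sub>v w)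
      @\<^sub>v (0\<^sub>m (dims N (i+1)) (dims M i) *\<^sub>v u + acts N j i *\<^sub>v w)"
    unfolding gsum_def using four_block_mat_mult_vec[OF A _ _ B u w] by simp
  then show ?thesis using A B u w by (simp add: zero_mult_mat_vec)
qed

lemma socle_free_below_gsum:
  assumes M: "acts_carrier n M" "socle_free_below n M D"
    and N: "acts_carrier n N" "socle_free_below n N D"
  shows "socle_free_below n (gsum M N) D"
  unfolding socle_free_below_def
proof (intro allI impI ballI)
  fix i and y :: "'a vec" assume i: "i < D" and y: "y \<in> carrier_vec (dims (gsum M N) i)"
    and killed: "\<forall>j\<le>n. acts (gsum M N) j i *\<^sub>v y = 0\<^sub>v (dims (gsum M N) (i + 1))"
  define u where "u = vec_first y (dims M i)"
  define w where "w = vec_last y (dims N i)"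
  have y_split: "y = u @\<^sub>v w" unfolding u_def w_def using y by (simp add: gsum_dims)
  have u: "u \<in> carrier_vec (dims M i)" and w: "w \<in> carrier_vec (dims N i)"
    unfolding u_def w_def by auto
  have "acts M j i *\<^sub>v u = 0\<^sub>v (dims M (i+1)) \<and> acts N j i *\<^sub>v w = 0\<^sub>v (dims N (i+1))"
    if j: "j \<le> n" for j
  proof -
    have "(acts M j i *\<^sub>v u) @\<^sub>v (acts N j i *\<^sub>v w) = 0\<^sub>v (dims M (i+1)) @\<^sub>v 0\<^sub>v (dims N (i+1))"
      using killed j acts_gsum_append[OF M(1) N(1) j u w] by (simp add: y_split gsum_dims append_zero_vec)
    then show ?thesis using acts_carrierD[OF M(1) j, of i] u by (subst (asm) append_vec_eq[where n = "dims M (i+1)"]) auto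
  qed
  then have "u = 0\<^sub>v (dims M i)" "w = 0\<^sub>v (dims N i)"
    using M(2) N(2) i u w unfolding socle_free_below_def by auto
  then show "y = 0\<^sub>v (dims (gsum M N) i)" by (simp add: y_split gsum_dims append_zero_vec)
qed

lemma exterior_relations_gsumD:
  assumes M: "acts_carrier n M" and N: "acts_carrier n N"
    and u: "\<And>j. u j \<in> carrier_vec (dims M (i+1))" and w: "\<And>j. w j \<in> carrier_vec (dims N (i+1))"
    and rel: "exterior_relations n (gsum M N) i (\<lambda>j. u j @\<^sub>v w j)"
  shows "exterior_relations n M i u" "exterior_relations n N i w"
proof -
  have act: "acts (gsum M N) l (i+1) *\<^sub>v (u j @\<^sub>v w j) = (acts M l (i+1) *\<^sub>v u j) @\<^sub>v (acts N l (i+1) *\<^sub>v w j)"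
    if "l \<le> n" for j l
    using acts_gsum_append[OF M N that u w] .
  have Mu: "acts M l (i+1) *\<^sub>v u j \<in> carrier_vec (dims M (i+2))"
    and Nw: "acts N l (i+1) *\<^sub>v w j \<in> carrier_vec (dims N (i+2))" if "l \<le> n" for j l
    using acts_carrierD'[OF M that, of i] acts_carrierD'[OF N that, of i] u w by auto
  have anti: "acts M l (i+1) *\<^sub>v u j = - (acts M j (i+1) *\<^sub>v u l) \<and>
        acts N l (i+1) *\<^sub>v w j = - (acts N j (i+1) *\<^sub>v w l)" if j: "j \<le> n" and l: "l \<le> n" for j l
  proof -
    have "(acts M l (i+1) *\<^sub>v u j) @\<^sub>v (acts N l (i+1) *\<^sub>v w j)
        = (- (acts M j (i+1) *\<^sub>v u l)) @\<^sub>v (- (acts N j (i+1) *\<^sub>v w l))"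
      using exterior_relations_anti[OF rel j l] act[OF l, of j] act[OF j, of l]
        uminus_append_vec[OF Mu[OF j, of l] Nw[OF j, of l]] by simp
    then show ?thesis using Mu[OF l, of j] Mu[OF j, of l]
      by (subst (asm) append_vec_eq[where n = "dims M (i+2)"]) auto
  qed
  have square: "acts M j (i+1) *\<^sub>v u j = 0\<^sub>v (dims M (i+2)) \<and> acts N j (i+1) *\<^sub>v w j = 0\<^sub>v (dims N (i+2))"
    if j: "j \<le> n" for j
  proof -
    have "(acts M j (i+1) *\<^sub>v u j) @\<^sub>v (acts N j (i+1) *\<^sub>v w j) = 0\<^sub>v (dims M (i+2)) @\<^sub>v 0\<^sub>v (dims N (i+2))"
      using exterior_relations_square[OF rel j] act[OF j, of j] by (simp add: gsum_dims append_zero_vec)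
    then show ?thesis using Mu[OF j, of j]
      by (subst (asm) append_vec_eq[where n = "dims M (i+2)"]) auto
  qed
  show "exterior_relations n M i u" "exterior_relations n N i w"
    by (intro exterior_relationsI; use u w anti square in blast)+
qed

lemma baer_injective_gsum:
  assumes M: "acts_carrier n M" "baer_injective n M" and N: "acts_carrier n N" "baer_injective n N"
  shows "baer_injective n (gsum M N)"
  unfolding baer_injective_def
proof (intro allI impI)
  fix i z assume rel: "exterior_relations n (gsum M N) i z"
  define u where "u j = vec_first (z j) (dims M (i+1))" for j
  define w where "w j = vec_last (z j) (dims N (i+1))" for j
  have z_split: "z j = u j @\<^sub>v w j" if "j \<le> n" for j
    using exterior_relations_carrier[OF rel that] unfolding u_def w_def by (simp add: gsum_dims)
  have u: "u j \<in> carrier_vec (dims M (i+1))" and w: "w j \<in> carrier_vec (dims N (i+1))" for j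
    unfolding u_def w_def by auto
  have "exterior_relations n (gsum M N) i (\<lambda>j. u j @\<^sub>v w j)"
    using rel exterior_relations_cong[of n z "\<lambda>j. u j @\<^sub>v w j"] z_split by simp
  note rels = exterior_relations_gsumD[OF M(1) N(1) u w this]
  obtain yM where yM: "yM \<in> carrier_vec (dims M i)" "\<And>j. j \<le> n \<Longrightarrow> acts M j i *\<^sub>v yM = u j"
    using M(2) rels(1) unfolding baer_injective_def by blast
  obtain yN where yN: "yN \<in> carrier_vec (dims N i)" "\<And>j. j \<le> n \<Longrightarrow> acts N j i *\<^sub>v yN = w j"
    using N(2) rels(2) unfolding baer_injective_def by blast
  have "acts (gsum M N) j i *\<^sub>v (yM @\<^sub>v yN) = z j" if j: "j \<le> n" for j
    using acts_gsum_append[OF M(1) N(1) j yM(1) yN(1)] yM(2) yN(2) j z_split[OF j] by simp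
  moreover have "yM @\<^sub>v yN \<in> carrier_vec (dims (gsum M N) i)" using yM yN by (simp add: gsum_dims)
  ultimately show "\<exists>y\<in>carrier_vec (dims (gsum M N) i). \<forall>j\<le>n. acts (gsum M N) j i *\<^sub>v y = z j"
    by blast
qed

lemma acts_carrier_gzero: "acts_carrier n gzero"
  unfolding acts_carrier_def gzero_def by auto

lemma socle_free_below_gzero: "socle_free_below n gzero D"
  unfolding socle_free_below_def gzero_def by (auto intro: vec_carrier_zero_eq)

lemma baer_injective_gzero: "baer_injective n (gzero :: 'k::field gmod)"
  unfolding baer_injective_def
proof (intro allI impI)
  fix i z assume rel: "exterior_relations n (gzero :: 'k gmod) i z"
  have "acts gzero j i *\<^sub>v 0\<^sub>v 0 = z j" if "j \<le> n" for j
    using exterior_relations_carrier[OF rel that] by (auto simp: gzero_def intro: vec_carrier_zero_eq)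
  moreover have "0\<^sub>v 0 \<in> carrier_vec (dims (gzero :: 'k gmod) i)" by (simp add: gzero_def)
  ultimately show "\<exists>y\<in>carrier_vec (dims (gzero :: 'k gmod) i). \<forall>j\<le>n. acts gzero j i *\<^sub>v y = z j"
    by blast
qed

section \<open>The modules \<open>\<Lambda>\<^sup>\<or>(a)\<close>\<close>

lemma set_subs_nth:
  assumes "c < length (subs n m)"
  shows "0 \<le> m" "set (subs n m ! c) \<subseteq> {..n}" "card (set (subs n m ! c)) = nat m"
proof -
  have mem: "subs n m ! c \<in> set (subs n m)" using assms by simp
  then show m: "0 \<le> m" by (cases "m < 0") (auto simp: subs_def)
  have xs: "subs n m ! c \<in> set (subseqs [0..<Suc n])" and len: "length (subs n m ! c) = nat m"
    using mem m by (auto simp: subs_def)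
  have "set (subs n m ! c) \<in> set ` set (subseqs [0..<Suc n])" using xs by blast
  then show "set (subs n m ! c) \<subseteq> {..n}" unfolding subseqs_powset by auto
  show "card (set (subs n m ! c)) = nat m"
    using distinct_card[OF subseqs_distinctD[OF xs]] len by simp
qed

lemma distinct_map_set_subs: "distinct (map set (subs n m))"
proof (cases "m < 0")
  case False
  have "distinct (map set (subseqs [0..<Suc n]))" by (rule distinct_set_subseqs) simp
  then show ?thesis using False by (simp add: subs_def distinct_map_filter)
qed (simp add: subs_def)

lemma subs_exhaustive:
  assumes "0 \<le> m" "S \<subseteq> {..n}" "card S = nat m"
  shows "\<exists>c < length (subs n m). set (subs n m ! c) = S"
proof -
  have "S \<subseteq> set [0..<Suc n]" using assms by auto
  then obtain xs where xs: "xs \<in> set (subseqs [0..<Suc n])" and S: "set xs = S"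
    using subset_subseqs by blast
  have "length xs = nat m" using distinct_card[OF subseqs_distinctD[OF xs]] S assms by simp
  then have "xs \<in> set (subs n m)" using xs assms by (simp add: subs_def)
  then show ?thesis using S by (metis in_set_conv_nth)
qed

lemma subs_nth_set_inj:
  "c < length (subs n m) \<Longrightarrow> c' < length (subs n m) \<Longrightarrow> set (subs n m ! c) = set (subs n m ! c') \<Longrightarrow> c = c'"
  using nth_eq_iff_index_eq[OF distinct_map_set_subs] by fastforce

text \<open>The coordinate of the dual basis vector \<open>e\<^sub>S\<^sup>*\<close> in \<^const>\<open>lamdual\<close>.\<close>
definition subs_index :: "nat \<Rightarrow> int \<Rightarrow> nat set \<Rightarrow> nat" where
  "subs_index n m S = (THE c. c < length (subs n m) \<and> set (subs n m ! c) = S)"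

lemma subs_index:
  assumes "0 \<le> m" "S \<subseteq> {..n}" "card S = nat m"
  shows "subs_index n m S < length (subs n m)" "set (subs n m ! subs_index n m S) = S"
proof -
  obtain c where c: "c < length (subs n m)" "set (subs n m ! c) = S"
    using subs_exhaustive[OF assms] by blast
  have "subs_index n m S = c" unfolding subs_index_def
    by (rule the_equality) (use c subs_nth_set_inj in auto)
  then show "subs_index n m S < length (subs n m)" "set (subs n m ! subs_index n m S) = S"
    using c by auto
qed

lemma subs_index_nth: "c < length (subs n m) \<Longrightarrow> subs_index n m (set (subs n m ! c)) = c"
  unfolding subs_index_def by (rule the_equality) (use subs_nth_set_inj in auto)

lemma subs_index_remove:
  assumes S: "S \<subseteq> {..n}" "card S = nat m" and j: "j \<in> S"
  shows "1 \<le> m" "card (S - {j}) = nat (m - 1)"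
    "subs_index n (m - 1) (S - {j}) < length (subs n (m - 1))"
    "set (subs n (m - 1) ! subs_index n (m - 1) (S - {j})) = S - {j}"
proof -
  have fin: "finite S" using S(1) finite_subset by blast
  then have "0 < card S" using j by (auto simp: card_gt_0_iff)
  then show m: "1 \<le> m" using S(2) by simp
  show card: "card (S - {j}) = nat (m - 1)" using S(2) j fin m by (simp add: nat_diff_distrib')
  show "subs_index n (m - 1) (S - {j}) < length (subs n (m - 1))"
    "set (subs n (m - 1) ! subs_index n (m - 1) (S - {j})) = S - {j}"
    using subs_index[of "m - 1" "S - {j}" n] S(1) m card by auto
qed

lemma subs_top_nonempty: "subs n (int n + 1) \<noteq> []"
proof -
  have "card {..n} = nat (int n + 1)" by simp
  then show ?thesis using subs_exhaustive[of "int n + 1" "{..n}" n] by auto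
qed

definition koszul_sign :: "nat \<Rightarrow> nat set \<Rightarrow> 'k::field" where
  "koszul_sign j S = (- 1) ^ card {s\<in>S. s < j}"

lemma koszul_sign_square: "koszul_sign j S * koszul_sign j S = (1::'k::field)"
  unfolding koszul_sign_def by (simp flip: power_add mult_2)

lemma koszul_sign_nonzero: "koszul_sign j S \<noteq> (0::'k::field)"
  unfolding koszul_sign_def by simp

lemma koszul_sign_remove_less:
  assumes "finite S" "j0 \<in> S" "j0 < j"
  shows "koszul_sign j (S - {j0}) = - (koszul_sign j S :: 'k::field)"
proof -
  have "{s \<in> S - {j0}. s < j} = {s \<in> S. s < j} - {j0}" by auto
  moreover have "card {s \<in> S. s < j} = Suc (card ({s \<in> S. s < j} - {j0}))"
    using assms by (intro card.remove) auto
  ultimately show ?thesis unfolding koszul_sign_def by simp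
qed

lemma koszul_sign_remove_greater:
  assumes "j0 < j"
  shows "koszul_sign j0 (S - {j}) = (koszul_sign j0 S :: 'k::field)"
proof -
  have "{s \<in> S - {j}. s < j0} = {s \<in> S. s < j0}" using assms by auto
  then show ?thesis unfolding koszul_sign_def by simp
qed

lemma lamdual_dims: "dims (lamdual n a) i = length (subs n (- a - i))"
  by (simp add: lamdual_def)

lemma lamdual_dims_succ:
  assumes "m = - a - i"
  shows "dims (lamdual n a) (i + 1) = length (subs n (m - 1))"
    "dims (lamdual n a) (i + 2) = length (subs n (m - 1 - 1))"
  unfolding assms lamdual_dims by (simp_all add: algebra_simps)

lemma acts_carrier_lamdual: "acts_carrier n (lamdual n a :: 'k::field gmod)"
  unfolding acts_carrier_def by (simp add: lamdual_def diff_diff_eq)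

lemma acts_lamdual_nth:
  fixes y :: "'k::field vec"
  assumes y: "y \<in> carrier_vec (length (subs n m))" and m: "m = - a - i"
    and r: "r < length (subs n (m - 1))"
  defines "T \<equiv> set (subs n (m - 1) ! r)"
  shows "(acts (lamdual n a) j i *\<^sub>v y) $ r =
    (if j \<le> n \<and> j \<notin> T then koszul_sign j (insert j T) * y $ subs_index n m (insert j T) else 0)"
proof -
  let ?L = "subs n m" and ?A = "acts (lamdual n a :: 'k gmod) j i" and ?c = "subs_index n m (insert j T)"
  have T: "0 \<le> m - 1" "T \<subseteq> {..n}" "card T = nat (m - 1)"
    using set_subs_nth[OF r] unfolding T_def by auto
  have c_set: "?c < length ?L" "set (?L ! ?c) = insert j T" if "j \<le> n" "j \<notin> T"
    using subs_index[of m "insert j T" n] T that finite_subset[OF T(2)] by auto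
  have entry: "?A $$ (r, c) =
      (if j \<in> set (?L ! c) \<and> T = set (?L ! c) - {j} then koszul_sign j (set (?L ! c)) else 0)"
    if "c < length ?L" for c
    using r that m unfolding T_def by (simp add: lamdual_def koszul_sign_def Let_def diff_diff_eq)
  have entry_cond: "(j \<in> set (?L ! c) \<and> T = set (?L ! c) - {j}) \<longleftrightarrow> (j \<le> n \<and> j \<notin> T \<and> c = ?c)"
    if c: "c < length ?L" for c
  proof
    assume "j \<in> set (?L ! c) \<and> T = set (?L ! c) - {j}"
    then have "set (?L ! c) = insert j T" "j \<notin> T" by auto
    then show "j \<le> n \<and> j \<notin> T \<and> c = ?c" using set_subs_nth(2)[OF c] subs_index_nth[OF c] by auto
  next
    assume j: "j \<le> n \<and> j \<notin> T \<and> c = ?c"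
    then have "set (?L ! c) = insert j T" using c_set by auto
    then show "j \<in> set (?L ! c) \<and> T = set (?L ! c) - {j}" using j by auto
  qed
  have "(?A *\<^sub>v y) $ r = (\<Sum>c\<in>{0..<length ?L}. ?A $$ (r, c) * y $ c)"
    using r y m by (simp add: lamdual_def scalar_prod_def diff_diff_eq)
  also have "\<dots> = (\<Sum>c\<in>{0..<length ?L}.
      if c = ?c then (if j \<le> n \<and> j \<notin> T then koszul_sign j (insert j T) * y $ c else 0) else 0)"
    by (intro sum.cong refl) (auto simp: entry entry_cond c_set)
  also have "\<dots> = (if j \<le> n \<and> j \<notin> T then koszul_sign j (insert j T) * y $ ?c else 0)"
    using c_set(1) by auto
  finally show ?thesis .
qed

lemma acts_lamdual_remove:
  fixes y :: "'k::field vec"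
  assumes y: "y \<in> carrier_vec (length (subs n m))" and m: "m = - a - i"
    and S: "S \<subseteq> {..n}" "card S = nat m" and j: "j \<in> S"
  shows "(acts (lamdual n a) j i *\<^sub>v y) $ subs_index n (m - 1) (S - {j})
    = koszul_sign j S * y $ subs_index n m S"
  using acts_lamdual_nth[OF y m subs_index_remove(3)[OF S j], of j] subs_index_remove(4)[OF S j] S(1) j
  by (auto simp: insert_absorb)

lemma acts_lamdual_mem:
  fixes y :: "'k::field vec"
  assumes y: "y \<in> carrier_vec (length (subs n m))" and m: "m = - a - i"
    and T: "0 \<le> m - 1" "T \<subseteq> {..n}" "card T = nat (m - 1)" and j: "j \<in> T"
  shows "(acts (lamdual n a) j i *\<^sub>v y) $ subs_index n (m - 1) T = 0"
  using acts_lamdual_nth[OF y m subs_index(1)[OF T]] subs_index(2)[OF T] j by simp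

lemma socle_free_below_lamdual:
  assumes D: "D \<le> - a"
  shows "socle_free_below n (lamdual n a :: 'k::field gmod) D"
  unfolding socle_free_below_def
proof (intro allI impI ballI)
  fix i and y :: "'k vec" assume i: "i < D" and y: "y \<in> carrier_vec (dims (lamdual n a :: 'k gmod) i)"
    and killed: "\<forall>j\<le>n. acts (lamdual n a) j i *\<^sub>v y = 0\<^sub>v (dims (lamdual n a :: 'k gmod) (i + 1))"
  define m where "m = - a - i"
  have y': "y \<in> carrier_vec (length (subs n m))" using y by (simp add: lamdual_dims m_def)
  show "y = 0\<^sub>v (dims (lamdual n a :: 'k gmod) i)"
  proof (rule eq_vecI)
    fix c assume "c < dim_vec (0\<^sub>v (dims (lamdual n a :: 'k gmod) i))"
    then have c: "c < length (subs n m)" by (simp add: lamdual_dims m_def)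
    let ?S = "set (subs n m ! c)"
    have S: "?S \<subseteq> {..n}" "card ?S = nat m" using set_subs_nth[OF c] by auto
    have "1 \<le> m" using i D m_def by simp
    then obtain j where j: "j \<in> ?S" using S(2) by fastforce
    have "(acts (lamdual n a) j i *\<^sub>v y) $ subs_index n (m - 1) (?S - {j}) = koszul_sign j ?S * y $ c"
      using acts_lamdual_remove[OF y' m_def S j] subs_index_nth[OF c] by simp
    moreover have "(acts (lamdual n a) j i *\<^sub>v y) $ subs_index n (m - 1) (?S - {j}) = 0"
      using killed subs_index_remove(3)[OF S j] S(1) j by (simp add: lamdual_dims m_def diff_diff_eq subset_iff)
    then have "(acts (lamdual n a) j i *\<^sub>v y) $ subs_index n (m - 1) (?S - {j}) = 0"
      using killed S(1) j by (simp add: lamdual_dims m_def diff_diff_eq subset_iff)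
    ultimately have "y $ c = 0" using koszul_sign_nonzero by (metis mult_eq_0_iff)
    then show "y $ c = 0\<^sub>v (dims (lamdual n a :: 'k gmod) i) $ c" using c by (simp add: lamdual_dims m_def)
  qed (use y in simp)
qed

lemma lamdual_relation_square:
  fixes z :: "nat \<Rightarrow> 'k::field vec"
  assumes z: "exterior_relations n (lamdual n a) i z" and m: "m = - a - i"
    and T: "T \<subseteq> {..n}" "card T = nat (m - 1)" and j: "j \<in> T"
  shows "z j $ subs_index n (m - 1) T = 0"
proof -
  have jn: "j \<le> n" using T j by auto
  have zj: "z j \<in> carrier_vec (length (subs n (m - 1)))"
    using exterior_relations_carrier[OF z jn] by (simp add: lamdual_dims_succ[OF m])
  have "(acts (lamdual n a) j (i + 1) *\<^sub>v z j) $ subs_index n (m - 1 - 1) (T - {j}) = 0"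
    using exterior_relations_square[OF z jn] subs_index_remove(3)[OF T j]
    by (simp add: lamdual_dims_succ[OF m])
  moreover have "(acts (lamdual n a) j (i + 1) *\<^sub>v z j) $ subs_index n (m - 1 - 1) (T - {j})
      = koszul_sign j T * z j $ subs_index n (m - 1) T"
    by (rule acts_lamdual_remove[OF zj _ T j]) (simp add: m)
  ultimately show ?thesis using koszul_sign_nonzero by (metis mult_eq_0_iff)
qed

lemma lamdual_relation_anti:
  fixes z :: "nat \<Rightarrow> 'k::field vec"
  assumes z: "exterior_relations n (lamdual n a) i z" and m: "m = - a - i"
    and S: "S \<subseteq> {..n}" "card S = nat m" and j: "j0 \<in> S" "j \<in> S" "j0 < j"
  shows "koszul_sign j S * z j0 $ subs_index n (m - 1) (S - {j0})
    = koszul_sign j0 S * z j $ subs_index n (m - 1) (S - {j})"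
proof -
  have fin: "finite S" using S(1) finite_subset by blast
  have jn: "j0 \<le> n" "j \<le> n" using S(1) j by auto
  have z_carrier: "z l \<in> carrier_vec (length (subs n (m - 1)))" if "l \<le> n" for l
    using exterior_relations_carrier[OF z that] by (simp add: lamdual_dims_succ[OF m])
  have S_minus: "S - {l} \<subseteq> {..n}" "card (S - {l}) = nat (m - 1)" if "l \<in> S" for l
    using S(1) subs_index_remove(2)[OF S that] by auto
  have m1: "m - 1 = - a - (i + 1)" by (simp add: m)
  have U: "S - {j} - {j0} = S - {j0} - {j}" by auto
  let ?U = "subs_index n (m - 1 - 1) (S - {j0} - {j})"
  have "?U < length (subs n (m - 1 - 1))"
    using subs_index_remove(3)[OF S_minus[OF j(1)], of j] j by simp
  moreover have "acts (lamdual n a :: 'k gmod) j0 (i + 1) \<in> carrier_mat (length (subs n (m - 1 - 1))) (length (subs n (m - 1)))"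
    using acts_carrierD'[OF acts_carrier_lamdual[of n a] jn(1), of i] unfolding lamdual_dims_succ[OF m] .
  then have "dim_vec (acts (lamdual n a) j0 (i + 1) *\<^sub>v z j) = length (subs n (m - 1 - 1))"
    by (simp add: carrier_matD(1))
  ultimately have "(acts (lamdual n a) j (i + 1) *\<^sub>v z j0) $ ?U = - ((acts (lamdual n a) j0 (i + 1) *\<^sub>v z j) $ ?U)"
    using exterior_relations_anti[OF z jn] by simp
  moreover have "(acts (lamdual n a) j (i + 1) *\<^sub>v z j0) $ ?U
      = koszul_sign j (S - {j0}) * z j0 $ subs_index n (m - 1) (S - {j0})"
    using acts_lamdual_remove[OF z_carrier[OF jn(1)] m1 S_minus[OF j(1)]] j by simp
  moreover have "(acts (lamdual n a) j0 (i + 1) *\<^sub>v z j) $ ?U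
      = koszul_sign j0 (S - {j}) * z j $ subs_index n (m - 1) (S - {j})"
  proof -
    have "(acts (lamdual n a) j0 (i + 1) *\<^sub>v z j) $ subs_index n (m - 1 - 1) (S - {j} - {j0})
        = koszul_sign j0 (S - {j}) * z j $ subs_index n (m - 1) (S - {j})"
      by (rule acts_lamdual_remove[OF z_carrier[OF jn(2)] m1 S_minus[OF j(2)]]) (use j in auto)
    then show ?thesis unfolding U .
  qed
  ultimately have "koszul_sign j (S - {j0}) * z j0 $ subs_index n (m - 1) (S - {j0})
      = - (koszul_sign j0 (S - {j}) * z j $ subs_index n (m - 1) (S - {j}))"
    by simp
  then show ?thesis
    unfolding koszul_sign_remove_less[OF fin j(1,3)] koszul_sign_remove_greater[OF j(3)] by simp
qed

text \<open>Contraction with the smallest element; by the exterior relations any other element of \<open>S\<close>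
  would give the same value (\<open>lamdual_lift_nth\<close>).\<close>
definition lamdual_lift :: "nat \<Rightarrow> int \<Rightarrow> (nat \<Rightarrow> 'k::field vec) \<Rightarrow> 'k vec" where
  "lamdual_lift n m z = vec (length (subs n m)) (\<lambda>c. let S = set (subs n m ! c) in
      if S = {} then 0 else koszul_sign (Min S) S * z (Min S) $ subs_index n (m - 1) (S - {Min S}))"

lemma lamdual_lift_nth:
  fixes z :: "nat \<Rightarrow> 'k::field vec"
  assumes z: "exterior_relations n (lamdual n a) i z" and m: "m = - a - i"
    and S: "S \<subseteq> {..n}" "card S = nat m" and j: "j \<in> S"
  shows "koszul_sign j S * lamdual_lift n m z $ subs_index n m S = z j $ subs_index n (m - 1) (S - {j})"
proof -
  define j0 where "j0 = Min S"
  have j0: "j0 \<in> S" "j0 \<le> j" unfolding j0_def using j finite_subset[OF S(1)] by (auto intro: Min_in)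
  have lift_S: "lamdual_lift n m z $ subs_index n m S = koszul_sign j0 S * z j0 $ subs_index n (m - 1) (S - {j0})"
    using subs_index[of m S n] subs_index_remove(1)[OF S j] S j unfolding lamdual_lift_def j0_def by auto
  show ?thesis
  proof (cases "j0 = j")
    case True
    then show ?thesis using lift_S by (simp add: mult.assoc[symmetric] koszul_sign_square)
  next
    case False
    then have "koszul_sign j S * z j0 $ subs_index n (m - 1) (S - {j0})
        = koszul_sign j0 S * z j $ subs_index n (m - 1) (S - {j})"
      using lamdual_relation_anti[OF z m S j0(1) j] j0(2) by simp
    moreover have "koszul_sign j S * lamdual_lift n m z $ subs_index n m S
        = koszul_sign j0 S * (koszul_sign j S * z j0 $ subs_index n (m - 1) (S - {j0}))"
      using lift_S by (simp add: ac_simps)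
    ultimately show ?thesis by (simp add: mult.assoc[symmetric] koszul_sign_square)
  qed
qed

lemma acts_lamdual_lift:
  fixes z :: "nat \<Rightarrow> 'k::field vec"
  assumes z: "exterior_relations n (lamdual n a) i z" and m: "m = - a - i" and j: "j \<le> n"
  shows "acts (lamdual n a) j i *\<^sub>v lamdual_lift n m z = z j"
proof (rule eq_vecI)
  have lift: "lamdual_lift n m z \<in> carrier_vec (length (subs n m))" by (simp add: lamdual_lift_def)
  have zj: "z j \<in> carrier_vec (length (subs n (m - 1)))"
    using exterior_relations_carrier[OF z j] by (simp add: lamdual_dims_succ[OF m])
  then show "dim_vec (acts (lamdual n a) j i *\<^sub>v lamdual_lift n m z) = dim_vec (z j)"
    by (simp add: lamdual_def m diff_diff_eq)
  fix r assume "r < dim_vec (z j)"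
  then have r: "r < length (subs n (m - 1))" using zj by simp
  define T where "T = set (subs n (m - 1) ! r)"
  have T: "0 \<le> m - 1" "T \<subseteq> {..n}" "card T = nat (m - 1)" using set_subs_nth[OF r] T_def by auto
  have r_T: "subs_index n (m - 1) T = r" unfolding T_def by (rule subs_index_nth[OF r])
  show "(acts (lamdual n a) j i *\<^sub>v lamdual_lift n m z) $ r = z j $ r"
  proof (cases "j \<in> T")
    case True
    then show ?thesis
      using acts_lamdual_mem[OF lift m T True] lamdual_relation_square[OF z m T(2,3) True] by (simp add: r_T)
  next
    case False
    have S: "insert j T \<subseteq> {..n}" "card (insert j T) = nat m" "j \<in> insert j T" "insert j T - {j} = T"
      using T j False finite_subset[OF T(2)] by auto
    then show ?thesis
      using acts_lamdual_remove[OF lift m S(1-3)] lamdual_lift_nth[OF z m S(1-3)] r_T by simp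
  qed
qed

lemma baer_injective_lamdual: "baer_injective n (lamdual n a :: 'k::field gmod)"
  unfolding baer_injective_def
proof (intro allI impI)
  fix i and z :: "nat \<Rightarrow> 'k vec" assume z: "exterior_relations n (lamdual n a) i z"
  have "lamdual_lift n (- a - i) z \<in> carrier_vec (dims (lamdual n a :: 'k gmod) i)"
    by (simp add: lamdual_lift_def lamdual_dims)
  then show "\<exists>y\<in>carrier_vec (dims (lamdual n a :: 'k gmod) i). \<forall>j\<le>n. acts (lamdual n a) j i *\<^sub>v y = z j"
    using acts_lamdual_lift[OF z refl] by blast
qed

abbreviation free_sum :: "nat \<Rightarrow> int list \<Rightarrow> 'k::field gmod" where
  "free_sum n as \<equiv> foldr (\<lambda>a R. gsum (lamdual n a) R) as gzero"

lemma acts_carrier_free_sum: "acts_carrier n (free_sum n as :: 'k::field gmod)"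
  by (induction as) (auto intro: acts_carrier_gsum acts_carrier_lamdual acts_carrier_gzero)

lemma baer_injective_free_sum: "baer_injective n (free_sum n as :: 'k::field gmod)"
  by (induction as)
    (auto intro: baer_injective_gsum acts_carrier_lamdual acts_carrier_free_sum baer_injective_lamdual
      baer_injective_gzero)

text \<open>The shift \<open>n + 2\<close>: a summand \<open>\<Lambda>\<^sup>\<or>(a)\<close> is nonzero exactly in degrees \<open>-a-n-1, \<dots>, -a\<close>,
  and its socle is the top degree \<open>-a\<close>.\<close>
lemma socle_free_below_free_sum:
  assumes "\<And>i. i \<le> B \<Longrightarrow> dims (free_sum n as :: 'k::field gmod) i = 0"
  shows "socle_free_below n (free_sum n as :: 'k gmod) (B + int n + 2)"
  using assms
proof (induction as)
  case Nil then show ?case by (simp add: socle_free_below_gzero)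
next
  case (Cons a as)
  have vanish: "dims (lamdual n a :: 'k gmod) i = 0" "dims (free_sum n as :: 'k gmod) i = 0" if "i \<le> B" for i
    using Cons.prems[OF that] by (simp_all add: gsum_dims)
  have "dims (lamdual n a :: 'k gmod) (- a - int n - 1) \<noteq> 0"
    using subs_top_nonempty[of n] by (simp add: lamdual_dims)
  then have "B + int n + 2 \<le> - a" using vanish(1)[of "- a - int n - 1"] by linarith
  then show ?case
    using socle_free_below_gsum[OF acts_carrier_lamdual socle_free_below_lamdual acts_carrier_free_sum]
      Cons.IH vanish(2) by simp
qed

lemma free_gmod_baer_injective:
  fixes M :: "'k::field gmod"
  assumes "free_gmod n M" "gmod_wf n M"
  shows "baer_injective n M"
proof -
  obtain as where iso: "giso n M (free_sum n as)" using assms(1) unfolding free_gmod_def by blast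
  obtain f g where f: "gmap n M (free_sum n as) f" and g: "gmap n (free_sum n as) M g"
    and gf: "\<And>i. g i * f i = 1\<^sub>m (dims M i)" and "\<And>i. f i * g i = 1\<^sub>m (dims (free_sum n as :: 'k gmod) i)"
    using iso unfolding giso_def by blast
  show ?thesis
    by (rule retract_baer_injective[OF f g gf gmod_wf_acts_carrier[OF assms(2)] acts_carrier_free_sum
          baer_injective_free_sum])
qed

lemma free_gmod_socle_free_below:
  fixes M :: "'k::field gmod"
  assumes "free_gmod n M" "gmod_wf n M" and vanish: "\<And>i. i \<le> B \<Longrightarrow> dims M i = 0"
  shows "socle_free_below n M (B + int n + 2)"
proof -
  obtain as where iso: "giso n M (free_sum n as)" using assms(1) unfolding free_gmod_def by blast
  obtain f g where f: "gmap n M (free_sum n as) f" and g: "gmap n (free_sum n as) M g"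
    and gf: "\<And>i. g i * f i = 1\<^sub>m (dims M i)" and "\<And>i. f i * g i = 1\<^sub>m (dims (free_sum n as :: 'k gmod) i)"
    using iso unfolding giso_def by blast
  have "socle_free_below n (free_sum n as :: 'k gmod) (B + int n + 2)"
    using socle_free_below_free_sum giso_dims_zero[OF iso] vanish by blast
  then show ?thesis
    using retract_socle_free_below[OF f gmap_carrier[OF g] gf gmod_wf_acts_carrier[OF assms(2)]
        acts_carrier_free_sum] by blast
qed

section \<open>Complexes, \<open>\<sigma>K\<close> and homotopies\<close>

lemma cplx_wf_gmod_wf: "cplx_wf n C \<Longrightarrow> gmod_wf n (cmod C p)"
  unfolding cplx_wf_def by auto

lemma cplx_wf_cdiff_gmap: "cplx_wf n C \<Longrightarrow> gmap n (cmod C p) (cmod C (p+1)) (cdiff C p)"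
  unfolding cplx_wf_def by auto

definition cplx_carrier :: "nat \<Rightarrow> 'k::field cplx \<Rightarrow> bool" where
  "cplx_carrier n C \<longleftrightarrow> (\<forall>p. acts_carrier n (cmod C p)) \<and>
     (\<forall>p i. cdiff C p i \<in> carrier_mat (dims (cmod C (p+1)) i) (dims (cmod C p) i))"

lemma cplx_carrier_acts: "cplx_carrier n C \<Longrightarrow> acts_carrier n (cmod C p)"
  unfolding cplx_carrier_def by auto

lemma cplx_carrier_cdiff:
  "cplx_carrier n C \<Longrightarrow> cdiff C p i \<in> carrier_mat (dims (cmod C (p+1)) i) (dims (cmod C p) i)"
  unfolding cplx_carrier_def by auto

lemma cplx_carrier_cdiff_pred:
  "cplx_carrier n C \<Longrightarrow> cdiff C (p-1) i \<in> carrier_mat (dims (cmod C p) i) (dims (cmod C (p-1)) i)"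
  using cplx_carrier_cdiff[of n C "p-1" i] by simp

lemma cplx_wf_carrier: "cplx_wf n C \<Longrightarrow> cplx_carrier n C"
  unfolding cplx_carrier_def cplx_wf_def using gmod_wf_acts_carrier gmap_carrier by blast

lemma sigma_dims: "dims (cmod (sigma K) p) i = (if - p \<le> i then dims (cmod K p) i else 0)"
  by (simp add: sigma_def)

lemma sigma_acts: "acts (cmod (sigma K) p) j i = (if - p \<le> i then acts (cmod K p) j i
    else 0\<^sub>m (if - p \<le> i + 1 then dims (cmod K p) (i+1) else 0) 0)"
  by (simp add: sigma_def)

lemma sigma_cdiff: "cdiff (sigma K) p i = (if - p \<le> i then cdiff K p i
    else 0\<^sub>m (if - (p+1) \<le> i then dims (cmod K (p+1)) i else 0) 0)"
  by (simp add: sigma_def)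

lemma cplx_carrier_sigma: "cplx_carrier n K \<Longrightarrow> cplx_carrier n (sigma K)"
  unfolding cplx_carrier_def acts_carrier_def
  by (auto simp: sigma_dims sigma_acts sigma_cdiff)

lemma HomC_gmap: "f \<in> HomC n K L \<Longrightarrow> gmap n (cmod K p) (cmod L p) (f p)"
  unfolding HomC_def by auto

lemma HomC_commute: "f \<in> HomC n K L \<Longrightarrow> f (p+1) i * cdiff K p i = cdiff L p i * f p i"
  unfolding HomC_def by auto

lemma HomC_carrier: "f \<in> HomC n K L \<Longrightarrow> f p i \<in> carrier_mat (dims (cmod L p) i) (dims (cmod K p) i)"
  using gmap_carrier[OF HomC_gmap] .

lemma incl_HomC:
  assumes K: "cplx_carrier n K"
  shows "incl K \<in> HomC n (sigma K) K"
  unfolding HomC_def gmap_def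
proof (intro CollectI conjI allI impI)
  fix p i
  show "incl K p i \<in> carrier_mat (dims (cmod K p) i) (dims (cmod (sigma K) p) i)"
    by (simp add: incl_def sigma_dims)
next
  fix p j i assume j: "j \<le> n"
  show "incl K p (i + 1) * acts (cmod (sigma K) p) j i = acts (cmod K p) j i * incl K p i"
    using acts_carrierD[OF cplx_carrier_acts[OF K, of p] j, of i] by (auto simp: incl_def sigma_acts)
next
  fix p i
  show "incl K (p + 1) i * cdiff (sigma K) p i = cdiff K p i * incl K p i"
    using cplx_carrier_cdiff[OF K, of p i] by (auto simp: incl_def sigma_cdiff)
qed

lemma HomC_comp:
  assumes f: "f \<in> HomC n K L" and g: "g \<in> HomC n L M"
    and K: "cplx_carrier n K" and L: "cplx_carrier n L" and M: "cplx_carrier n M"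
  shows "cm_comp g f \<in> HomC n K M"
  unfolding HomC_def cm_comp_def
proof (intro CollectI conjI allI)
  fix p show "gmap n (cmod K p) (cmod M p) (\<lambda>i. g p i * f p i)"
    by (rule gmap_comp[OF HomC_gmap[OF f] HomC_gmap[OF g] cplx_carrier_acts[OF K]
          cplx_carrier_acts[OF L] cplx_carrier_acts[OF M]])
next
  fix p i
  have c: "f p i \<in> carrier_mat (dims (cmod L p) i) (dims (cmod K p) i)"
    "f (p+1) i \<in> carrier_mat (dims (cmod L (p+1)) i) (dims (cmod K (p+1)) i)"
    "g p i \<in> carrier_mat (dims (cmod M p) i) (dims (cmod L p) i)"
    "g (p+1) i \<in> carrier_mat (dims (cmod M (p+1)) i) (dims (cmod L (p+1)) i)"
    "cdiff K p i \<in> carrier_mat (dims (cmod K (p+1)) i) (dims (cmod K p) i)"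
    "cdiff L p i \<in> carrier_mat (dims (cmod L (p+1)) i) (dims (cmod L p) i)"
    "cdiff M p i \<in> carrier_mat (dims (cmod M (p+1)) i) (dims (cmod M p) i)"
    using HomC_carrier[OF f] HomC_carrier[OF g] cplx_carrier_cdiff[OF K] cplx_carrier_cdiff[OF L]
      cplx_carrier_cdiff[OF M] by auto
  have "g (p+1) i * f (p+1) i * cdiff K p i = g (p+1) i * (cdiff L p i * f p i)"
    using HomC_commute[OF f] c by simp
  also have "\<dots> = (g (p+1) i * cdiff L p i) * f p i" using c by simp
  also have "\<dots> = (cdiff M p i * g p i) * f p i" using HomC_commute[OF g] by simp
  also have "\<dots> = cdiff M p i * (g p i * f p i)" using c by simp
  finally show "g (p+1) i * f (p+1) i * cdiff K p i = cdiff M p i * (g p i * f p i)" .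
qed

lemma cm_comp_incl_upper:
  assumes "f \<in> HomC n K I" "- p \<le> i"
  shows "cm_comp f (incl K) p i = f p i"
  using HomC_carrier[OF assms(1), of p i] assms(2) by (simp add: cm_comp_def incl_def)

lemma HomC_sigma_lower:
  assumes "f \<in> HomC n (sigma K) I" "\<not> - p \<le> i"
  shows "f p i = 0\<^sub>m (dims (cmod I p) i) 0"
  using HomC_carrier[OF assms(1), of p i] assms(2) by (simp add: sigma_dims mat_zero_cols)

lemma htpI:
  assumes "f \<in> HomC n K L" "g \<in> HomC n K L" "\<And>p. gmap n (cmod K p) (cmod L (p-1)) (h p)"
    "\<And>p i. f p i - g p i = cdiff L (p-1) i * h p i + h (p+1) i * cdiff K p i"
  shows "(f, g) \<in> htp n K L"
  using assms unfolding htp_def by blast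

lemma htpE:
  assumes "(f, g) \<in> htp n K L"
  obtains h where "f \<in> HomC n K L" "g \<in> HomC n K L" "\<forall>p. gmap n (cmod K p) (cmod L (p-1)) (h p)"
    "\<forall>p i. f p i - g p i = cdiff L (p-1) i * h p i + h (p+1) i * cdiff K p i"
  using assms unfolding htp_def by blast

lemma homotopy_carrier:
  assumes "\<And>p. gmap n (cmod K p) (cmod L (p-1)) (h p)"
  shows "h p i \<in> carrier_mat (dims (cmod L (p-1)) i) (dims (cmod K p) i)"
    "h (p+1) i \<in> carrier_mat (dims (cmod L p) i) (dims (cmod K (p+1)) i)"
  using gmap_carrier[OF assms[of p]] gmap_carrier[OF assms[of "p+1"]] by auto

lemma htp_refl:
  assumes K: "cplx_carrier n K" and L: "cplx_carrier n L" and f: "f \<in> HomC n K L"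
  shows "(f, f) \<in> htp n K L"
proof (rule htpI[OF f f])
  fix p
  show "gmap n (cmod K p) (cmod L (p-1)) (\<lambda>i. 0\<^sub>m (dims (cmod L (p-1)) i) (dims (cmod K p) i))"
    by (rule gmap_zero[OF cplx_carrier_acts[OF K] cplx_carrier_acts[OF L]])
  fix i
  show "f p i - f p i = cdiff L (p-1) i * 0\<^sub>m (dims (cmod L (p-1)) i) (dims (cmod K p) i)
      + 0\<^sub>m (dims (cmod L (p+1-1)) i) (dims (cmod K (p+1)) i) * cdiff K p i"
    using HomC_carrier[OF f, of p i] cplx_carrier_cdiff_pred[OF L, of p i] cplx_carrier_cdiff[OF K, of p i]
    by simp
qed

lemma htp_sym:
  assumes K: "cplx_carrier n K" and L: "cplx_carrier n L" and fg: "(f, g) \<in> htp n K L"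
  shows "(g, f) \<in> htp n K L"
proof -
  obtain h where f: "f \<in> HomC n K L" and g: "g \<in> HomC n K L"
    and "\<forall>p. gmap n (cmod K p) (cmod L (p-1)) (h p)"
    and "\<forall>p i. f p i - g p i = cdiff L (p-1) i * h p i + h (p+1) i * cdiff K p i"
    using fg by (rule htpE)
  note h = this(3)[rule_format] and fgh = this(4)[rule_format]
  show ?thesis
  proof (rule htpI[OF g f])
    show "gmap n (cmod K p) (cmod L (p-1)) (\<lambda>i. - h p i)" for p
      by (rule gmap_uminus[OF h cplx_carrier_acts[OF K] cplx_carrier_acts[OF L]])
    fix p i
    have c: "cdiff L (p-1) i \<in> carrier_mat (dims (cmod L p) i) (dims (cmod L (p-1)) i)"
      "cdiff K p i \<in> carrier_mat (dims (cmod K (p+1)) i) (dims (cmod K p) i)"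
      using cplx_carrier_cdiff_pred[OF L] cplx_carrier_cdiff[OF K] .
    note hc = homotopy_carrier[OF h, of p i]
    have "g p i - f p i = - (cdiff L (p-1) i * h p i) + - (h (p+1) i * cdiff K p i)"
      by (rule minus_mat_eq_add_swap[OF HomC_carrier[OF f] HomC_carrier[OF g] _ _ fgh])
        (use c hc in auto)
    then show "g p i - f p i = cdiff L (p-1) i * - h p i + - h (p+1) i * cdiff K p i"
      using c hc by simp
  qed
qed

lemma htp_trans:
  assumes K: "cplx_carrier n K" and L: "cplx_carrier n L"
    and fg: "(f, g) \<in> htp n K L" and gk: "(g, k) \<in> htp n K L"
  shows "(f, k) \<in> htp n K L"
proof -
  obtain h1 where f: "f \<in> HomC n K L" and g: "g \<in> HomC n K L"
    and "\<forall>p. gmap n (cmod K p) (cmod L (p-1)) (h1 p)"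
    and "\<forall>p i. f p i - g p i = cdiff L (p-1) i * h1 p i + h1 (p+1) i * cdiff K p i"
    using fg by (rule htpE)
  note h1 = this(3)[rule_format] and fg1 = this(4)[rule_format]
  obtain h2 where "g \<in> HomC n K L" and k: "k \<in> HomC n K L"
    and "\<forall>p. gmap n (cmod K p) (cmod L (p-1)) (h2 p)"
    and "\<forall>p i. g p i - k p i = cdiff L (p-1) i * h2 p i + h2 (p+1) i * cdiff K p i"
    using gk by (rule htpE)
  note h2 = this(3)[rule_format] and gk2 = this(4)[rule_format]
  show ?thesis
  proof (rule htpI[OF f k])
    show "gmap n (cmod K p) (cmod L (p-1)) (\<lambda>i. h1 p i + h2 p i)" for p
      by (rule gmap_add[OF h1 h2 cplx_carrier_acts[OF K] cplx_carrier_acts[OF L]])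
    fix p i
    have c: "cdiff L (p-1) i \<in> carrier_mat (dims (cmod L p) i) (dims (cmod L (p-1)) i)"
      "cdiff K p i \<in> carrier_mat (dims (cmod K (p+1)) i) (dims (cmod K p) i)"
      using cplx_carrier_cdiff_pred[OF L] cplx_carrier_cdiff[OF K] .
    note hc = homotopy_carrier[OF h1, of p i] homotopy_carrier[OF h2, of p i]
    have "f p i - k p i = (cdiff L (p-1) i * h1 p i + cdiff L (p-1) i * h2 p i)
        + (h1 (p+1) i * cdiff K p i + h2 (p+1) i * cdiff K p i)"
      by (rule minus_mat_eq_add_trans[OF HomC_carrier[OF f] HomC_carrier[OF g] HomC_carrier[OF k]
            _ _ _ _ fg1 gk2]) (use c hc in auto)
    then show "f p i - k p i = cdiff L (p-1) i * (h1 p i + h2 p i) + (h1 (p+1) i + h2 (p+1) i) * cdiff K p i"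
      using c hc by (simp add: mult_add_distrib_mat add_mult_distrib_mat)
  qed
qed

lemma equiv_htp:
  assumes "cplx_carrier n K" "cplx_carrier n L"
  shows "equiv (HomC n K L) (htp n K L)"
proof (rule equivI)
  show "htp n K L \<subseteq> HomC n K L \<times> HomC n K L" by (auto elim: htpE)
  show "refl_on (HomC n K L) (htp n K L)" by (rule refl_onI) (use htp_refl[OF assms] in \<open>auto elim: htpE\<close>)
  show "sym (htp n K L)" by (rule symI) (rule htp_sym[OF assms])
  show "trans (htp n K L)" by (rule transI) (rule htp_trans[OF assms])
qed

section \<open>Restriction along \<open>\<sigma>K \<hookrightarrow> K\<close>\<close>

lemma bij_betw_quotient:
  assumes bij: "bij_betw \<phi> A B" and A: "equiv A R" and B: "equiv B S"
    and compat: "\<And>x y. x \<in> A \<Longrightarrow> y \<in> A \<Longrightarrow> (x, y) \<in> R \<longleftrightarrow> (\<phi> x, \<phi> y) \<in> S"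
  shows "bij_betw (\<lambda>c. \<Union>x\<in>c. S `` {\<phi> x}) (A // R) (B // S)"
proof -
  have image_class: "(\<Union>x\<in>R `` {a}. S `` {\<phi> x}) = S `` {\<phi> a}" if "a \<in> A" for a
  proof (rule UN_equiv_class[OF A _ that])
    show "(\<lambda>x. S `` {\<phi> x}) respects R"
      using compat A B bij by (auto intro!: congruentI equiv_class_eq dest: bij_betwE simp: equiv_def refl_on_def)
  qed
  show ?thesis
    unfolding bij_betw_def
  proof
    show "inj_on (\<lambda>c. \<Union>x\<in>c. S `` {\<phi> x}) (A // R)"
    proof (rule inj_onI)
      fix c d assume c: "c \<in> A // R" and d: "d \<in> A // R"
        and eq: "(\<Union>x\<in>c. S `` {\<phi> x}) = (\<Union>x\<in>d. S `` {\<phi> x})"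
      obtain a where a: "a \<in> A" "c = R `` {a}" using c by (auto elim: quotientE)
      obtain b where b: "b \<in> A" "d = R `` {b}" using d by (auto elim: quotientE)
      have "\<phi> a \<in> B" "\<phi> b \<in> B" using bij a b by (auto dest: bij_betwE)
      then have "(\<phi> a, \<phi> b) \<in> S"
        using eq image_class[OF a(1)] image_class[OF b(1)] a b B by (simp add: eq_equiv_class_iff)
      then show "c = d" using compat[OF a(1) b(1)] A a b by (simp add: equiv_class_eq)
    qed
    show "(\<lambda>c. \<Union>x\<in>c. S `` {\<phi> x}) ` (A // R) = B // S"
      using image_class bij_betw_imp_surj_on[OF bij] by (auto simp: quotient_def)
  qed
qed

lemma gmap_extend_from_sigma:
  assumes g: "gmap n (cmod (sigma K) p) M g" and K: "gmod_wf n (cmod K p)"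
    and M: "acts_carrier n M" "baer_injective n M"
  shows "\<exists>F. gmap n (cmod K p) M F \<and> (\<forall>i. - p \<le> i \<longrightarrow> F i = g i)"
proof (rule gmap_extend_from[OF K M])
  fix i assume "- p \<le> i"
  then show "g i \<in> carrier_mat (dims M i) (dims (cmod K p) i)"
    using gmap_carrier[OF g, of i] by (simp add: sigma_dims)
next
  fix i j assume "- p \<le> i" "j \<le> n"
  then show "g (i + 1) * acts (cmod K p) j i = acts M j i * g i"
    using gmap_commute[OF g, of j i] by (simp add: sigma_acts)
qed blast

lemma htp_restrict_incl:
  assumes K: "cplx_carrier n K" and I: "cplx_carrier n I" and fg: "(f, g) \<in> htp n K I"
  shows "(cm_comp f (incl K), cm_comp g (incl K)) \<in> htp n (sigma K) I"
proof -
  obtain h where f: "f \<in> HomC n K I" and g: "g \<in> HomC n K I"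
    and "\<forall>p. gmap n (cmod K p) (cmod I (p-1)) (h p)"
    and "\<forall>p i. f p i - g p i = cdiff I (p-1) i * h p i + h (p+1) i * cdiff K p i"
    using fg by (rule htpE)
  note h = this(3)[rule_format] and fgh = this(4)[rule_format]
  have S: "cplx_carrier n (sigma K)" using cplx_carrier_sigma[OF K] .
  have incl: "incl K \<in> HomC n (sigma K) K" using incl_HomC[OF K] .
  show ?thesis
  proof (rule htpI[OF HomC_comp[OF incl f S K I] HomC_comp[OF incl g S K I]])
    show "gmap n (cmod (sigma K) p) (cmod I (p-1)) (\<lambda>i. h p i * incl K p i)" for p
      by (rule gmap_comp[OF HomC_gmap[OF incl] h cplx_carrier_acts[OF S] cplx_carrier_acts[OF K]
            cplx_carrier_acts[OF I]])
    fix p i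
    have c: "f p i \<in> carrier_mat (dims (cmod I p) i) (dims (cmod K p) i)"
      "g p i \<in> carrier_mat (dims (cmod I p) i) (dims (cmod K p) i)"
      "incl K p i \<in> carrier_mat (dims (cmod K p) i) (dims (cmod (sigma K) p) i)"
      "incl K (p+1) i \<in> carrier_mat (dims (cmod K (p+1)) i) (dims (cmod (sigma K) (p+1)) i)"
      "cdiff I (p-1) i \<in> carrier_mat (dims (cmod I p) i) (dims (cmod I (p-1)) i)"
      "cdiff K p i \<in> carrier_mat (dims (cmod K (p+1)) i) (dims (cmod K p) i)"
      "cdiff (sigma K) p i \<in> carrier_mat (dims (cmod (sigma K) (p+1)) i) (dims (cmod (sigma K) p) i)"
      using HomC_carrier[OF f] HomC_carrier[OF g] HomC_carrier[OF incl] cplx_carrier_cdiff_pred[OF I]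
        cplx_carrier_cdiff[OF K] cplx_carrier_cdiff[OF S] by auto
    note hc = homotopy_carrier[OF h, of p i]
    have "cm_comp f (incl K) p i - cm_comp g (incl K) p i = (f p i - g p i) * incl K p i"
      unfolding cm_comp_def using c by (simp add: minus_mult_distrib_mat)
    also have "\<dots> = cdiff I (p-1) i * h p i * incl K p i + h (p+1) i * (cdiff K p i * incl K p i)"
      unfolding fgh using c hc by (simp add: add_mult_distrib_mat[of _ "dims (cmod I p) i" "dims (cmod K p) i"])
    also have "cdiff K p i * incl K p i = incl K (p+1) i * cdiff (sigma K) p i"
      using HomC_commute[OF incl] by simp
    finally show "cm_comp f (incl K) p i - cm_comp g (incl K) p i
        = cdiff I (p-1) i * (h p i * incl K p i) + h (p+1) i * incl K (p+1) i * cdiff (sigma K) p i"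
      using c hc by simp
  qed
qed

context
  fixes n :: nat and I K :: "'k::field cplx"
  assumes I_wf: "cplx_wf n I" and K_wf: "cplx_wf n K"
    and I_socle_free: "\<And>p. socle_free_below n (cmod I p) (1 - p)"
    and I_baer: "\<And>p. baer_injective n (cmod I p)"
begin

lemmas I_carrier = cplx_wf_carrier[OF I_wf]
  and K_carrier = cplx_wf_carrier[OF K_wf]
  and sigma_carrier = cplx_carrier_sigma[OF cplx_wf_carrier[OF K_wf]]

lemma I_socle_free_from: "socle_free_below n (cmod I p) (- p)"
  using socle_free_below_mono[OF I_socle_free] by simp

lemma restrict_incl_HomC: "f \<in> HomC n K I \<Longrightarrow> cm_comp f (incl K) \<in> HomC n (sigma K) I"
  by (rule HomC_comp[OF incl_HomC[OF K_carrier] _ sigma_carrier K_carrier I_carrier])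

lemma restrict_incl_inj:
  assumes f: "f \<in> HomC n K I" and g: "g \<in> HomC n K I" and eq: "cm_comp f (incl K) = cm_comp g (incl K)"
  shows "f = g"
proof (intro ext)
  fix p i
  show "f p i = g p i"
  proof (rule gmap_eq_if_eq_from[OF I_socle_free_from cplx_carrier_acts[OF I_carrier]
        cplx_carrier_acts[OF K_carrier] HomC_gmap[OF f] HomC_gmap[OF g]])
    fix i assume "- p \<le> i"
    then show "f p i = g p i" using fun_cong[OF fun_cong[OF eq, of p], of i]
      by (simp add: cm_comp_incl_upper[OF f] cm_comp_incl_upper[OF g])
  qed
qed

lemma restrict_incl_surj:
  assumes g: "g \<in> HomC n (sigma K) I"
  shows "\<exists>f\<in>HomC n K I. cm_comp f (incl K) = g"
proof -
  have "\<forall>p. \<exists>Fp. gmap n (cmod K p) (cmod I p) Fp \<and> (\<forall>i. - p \<le> i \<longrightarrow> Fp i = g p i)"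
    using gmap_extend_from_sigma[OF HomC_gmap[OF g] cplx_wf_gmod_wf[OF K_wf]
        cplx_carrier_acts[OF I_carrier] I_baer] by blast
  from choice[OF this] obtain F
    where "\<forall>p. gmap n (cmod K p) (cmod I p) (F p) \<and> (\<forall>i. - p \<le> i \<longrightarrow> F p i = g p i)" ..
  then have F: "\<And>p. gmap n (cmod K p) (cmod I p) (F p)" and F_g: "\<And>p i. - p \<le> i \<Longrightarrow> F p i = g p i"
    by blast+
  have "F (p+1) i * cdiff K p i = cdiff I p i * F p i" for p i
  proof (rule gmap_eq_if_eq_from[where D = "- p"])
    show "socle_free_below n (cmod I (p+1)) (- p)" using I_socle_free[of "p+1"] by simp
    show "gmap n (cmod K p) (cmod I (p+1)) (\<lambda>i. F (p+1) i * cdiff K p i)"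
      "gmap n (cmod K p) (cmod I (p+1)) (\<lambda>i. cdiff I p i * F p i)"
      using gmap_comp[OF cplx_wf_cdiff_gmap[OF K_wf] F] gmap_comp[OF F cplx_wf_cdiff_gmap[OF I_wf]]
        cplx_carrier_acts[OF K_carrier] cplx_carrier_acts[OF I_carrier] by blast+
    fix i assume i: "- p \<le> i"
    have "F (p+1) i * cdiff K p i = g (p+1) i * cdiff (sigma K) p i"
      using F_g[of "p+1" i] i by (simp add: sigma_cdiff)
    also have "\<dots> = cdiff I p i * F p i" using HomC_commute[OF g] F_g[OF i] by simp
    finally show "F (p+1) i * cdiff K p i = cdiff I p i * F p i" .
  qed (use cplx_carrier_acts[OF I_carrier] cplx_carrier_acts[OF K_carrier] in auto)
  then have FH: "F \<in> HomC n K I" unfolding HomC_def using F by blast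
  have "cm_comp F (incl K) p i = g p i" for p i
    using cm_comp_incl_upper[OF FH] F_g HomC_sigma_lower[OF restrict_incl_HomC[OF FH]] HomC_sigma_lower[OF g]
    by (cases "- p \<le> i") auto
  then show ?thesis using FH by blast
qed

lemma htp_of_htp_restrict_incl:
  assumes f: "f \<in> HomC n K I" and g: "g \<in> HomC n K I"
    and fg: "(cm_comp f (incl K), cm_comp g (incl K)) \<in> htp n (sigma K) I"
  shows "(f, g) \<in> htp n K I"
proof -
  obtain h where "cm_comp f (incl K) \<in> HomC n (sigma K) I" "cm_comp g (incl K) \<in> HomC n (sigma K) I"
    and "\<forall>p. gmap n (cmod (sigma K) p) (cmod I (p-1)) (h p)"
    and "\<forall>p i. cm_comp f (incl K) p i - cm_comp g (incl K) p i =
        cdiff I (p-1) i * h p i + h (p+1) i * cdiff (sigma K) p i"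
    using fg by (rule htpE)
  note h = this(3)[rule_format] and fgh = this(4)[rule_format]
  have "\<forall>p. \<exists>Hp. gmap n (cmod K p) (cmod I (p-1)) Hp \<and> (\<forall>i. - p \<le> i \<longrightarrow> Hp i = h p i)"
    using gmap_extend_from_sigma[OF h cplx_wf_gmod_wf[OF K_wf] cplx_carrier_acts[OF I_carrier] I_baer]
    by blast
  from choice[OF this] obtain H
    where "\<forall>p. gmap n (cmod K p) (cmod I (p-1)) (H p) \<and> (\<forall>i. - p \<le> i \<longrightarrow> H p i = h p i)" ..
  then have H: "\<And>p. gmap n (cmod K p) (cmod I (p-1)) (H p)" and H_h: "\<And>p i. - p \<le> i \<Longrightarrow> H p i = h p i"
    by blast+
  show ?thesis
  proof (rule htpI[OF f g H])
    fix p i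
    have dI: "gmap n (cmod I (p-1)) (cmod I p) (cdiff I (p-1))"
      using cplx_wf_cdiff_gmap[OF I_wf, of "p-1"] by simp
    have H1: "gmap n (cmod K (p+1)) (cmod I p) (H (p+1))" using H[of "p+1"] by simp
    note aK = cplx_carrier_acts[OF K_carrier] and aI = cplx_carrier_acts[OF I_carrier]
    show "f p i - g p i = cdiff I (p-1) i * H p i + H (p+1) i * cdiff K p i"
    proof (rule gmap_eq_if_eq_from[OF I_socle_free_from aI aK])
      show "gmap n (cmod K p) (cmod I p) (\<lambda>i. f p i - g p i)"
        by (rule gmap_diff[OF HomC_gmap[OF f] HomC_gmap[OF g] aK aI])
      show "gmap n (cmod K p) (cmod I p) (\<lambda>i. cdiff I (p-1) i * H p i + H (p+1) i * cdiff K p i)"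
        by (rule gmap_add[OF gmap_comp[OF H dI aK aI aI] gmap_comp[OF cplx_wf_cdiff_gmap[OF K_wf] H1 aK aK aI] aK aI])
      fix i assume i: "- p \<le> i"
      have "f p i - g p i = cm_comp f (incl K) p i - cm_comp g (incl K) p i"
        using cm_comp_incl_upper[OF f i] cm_comp_incl_upper[OF g i] by simp
      also have "\<dots> = cdiff I (p-1) i * H p i + H (p+1) i * cdiff K p i"
        using fgh H_h[OF i] H_h[of "p+1" i] i by (simp add: sigma_cdiff)
      finally show "f p i - g p i = cdiff I (p-1) i * H p i + H (p+1) i * cdiff K p i" .
    qed
  qed
qed

theorem restrict_incl_bij:
  shows "bij_betw (\<lambda>f. cm_comp f (incl K)) (HomC n K I) (HomC n (sigma K) I)"
    and "bij_betw (\<lambda>c. \<Union>f\<in>c. htp n (sigma K) I `` {cm_comp f (incl K)})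
          (HomK n K I) (HomK n (sigma K) I)"
proof -
  show bij: "bij_betw (\<lambda>f. cm_comp f (incl K)) (HomC n K I) (HomC n (sigma K) I)"
    unfolding bij_betw_def
  proof
    show "inj_on (\<lambda>f. cm_comp f (incl K)) (HomC n K I)" using restrict_incl_inj by (intro inj_onI) blast
    show "(\<lambda>f. cm_comp f (incl K)) ` HomC n K I = HomC n (sigma K) I"
      using restrict_incl_HomC restrict_incl_surj by blast
  qed
  show "bij_betw (\<lambda>c. \<Union>f\<in>c. htp n (sigma K) I `` {cm_comp f (incl K)}) (HomK n K I) (HomK n (sigma K) I)"
    unfolding HomK_def
    by (rule bij_betw_quotient[OF bij equiv_htp[OF K_carrier I_carrier] equiv_htp[OF sigma_carrier I_carrier]])
      (use htp_restrict_incl[OF K_carrier I_carrier] htp_of_htp_restrict_incl in blast)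
qed

end

theorem lemma3p1:
  fixes n :: nat and I K :: "'k::field cplx"
  assumes "n \<ge> 2"
    and "cplx_wf n I" and "bounded_cplx I" and "\<forall>p. free_gmod n (cmod I p)"
    and "F0_zero n I"
    and "cplx_wf n K" and "bounded_cplx K"
  shows "bij_betw (\<lambda>f. cm_comp f (incl K)) (HomC n K I) (HomC n (sigma K) I)
       \<and> bij_betw (\<lambda>c. \<Union>f\<in>c. htp n (sigma K) I `` {cm_comp f (incl K)})
                 (HomK n K I) (HomK n (sigma K) I)"
proof -
  have I_baer: "baer_injective n (cmod I p)" for p
    using free_gmod_baer_injective assms(4) cplx_wf_gmod_wf[OF assms(2)] by blast
  have "socle_free_below n (cmod I p) ((- p - int n - 1) + int n + 2)" for p
    using free_gmod_socle_free_below[OF _ cplx_wf_gmod_wf[OF assms(2)]] assms(4,5)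
    unfolding F0_zero_def by blast
  then have I_socle_free: "socle_free_below n (cmod I p) (1 - p)" for p by simp
  show ?thesis using restrict_incl_bij[OF assms(2,6) I_socle_free I_baer] by blast
qed

end
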